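(* Let $\mathbb M^3(\rho)$ be a $3$-dimensional simply connected complete Riemannian manifold of constant sectional curvature $\rho$, and let $N^2\subset \mathbb M^3(\rho)$ be a non-isoparametric rotational surface with constant skew curvature $\mathcal{S}_k=c>0$. If $\gamma$ is a profile curve of $N^2$, parametrized by arc-length $s$, then the curvature $\kappa$ of $\gamma$ satisfies the Euler–Lagrange equation of the exponential type curvature energy $\mathbf{\Theta}_\mu(\gamma)=\int_\gamma e^{\mu\kappa}\,ds$ with $\mu=-1/c$, namely $$\frac{d^2}{ds^2}\left(e^{\mu\kappa}\right)+\left(\kappa^2-\frac{\kappa}{\mu}+\rho\right)e^{\mu\kappa}=0 .$$
   Context: For a surface $N^2$ immersed in $\mathbb M^3(\rho)$ with principal curvatures $\kappa_1\ge\kappa_2$, the skew curvature is $\mathcal{S}_k=2\sqrt{H^2-K+\rho}=|\kappa_1-\kappa_2|$, where $H=(\kappa_1+\kappa_2)/2$ is the mean curvature and $K=\kappa_1\kappa_2+\rho$ the Gaussian curvature. The surface is isoparametric if both principal curvatures are constant. A surface is rotational if it is invariant under a one-parameter group of rotations of $\mathbb M^3(\rho)$ (isometries fixing pointwise a geodesic, the rotation axis). A profile curve of a rotational surface is a curve orthogonal to the orbits of the group; it lies in a totally geodesic surface of $\mathbb M^3(\rho)$, identified with the $2$-space form $\mathbb M^2(\rho)$, and $\kappa$ denotes its (signed) geodesic curvature in $\mathbb M^2(\rho)$. *)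

theory Defs
  imports "HOL-Analysis.Analysis"
begin

text \<open>All three space forms are realised inside real^4:
  rho > 0 : the round sphere {x. x.x = 1/rho} with the Euclidean inner product,
  rho = 0 : the hyperplane {x. x$1 = 0} (a copy of R^3) with the Euclidean inner product,
  rho < 0 : the upper sheet {x. -x1^2+x2^2+x3^2+x4^2 = 1/rho, x1 > 0} of the hyperboloid
            with the Lorentzian inner product.
  The Riemannian metric of M^3(rho) is the restriction of gform rho.\<close>

definition gform :: "real \<Rightarrow> real^4 \<Rightarrow> real^4 \<Rightarrow> real" where
  "gform \<rho> x y = (if \<rho> < 0 then - (x$1 * y$1) else x$1 * y$1) + x$2 * y$2 + x$3 * y$3 + x$4 * y$4"

definition Mspace :: "real \<Rightarrow> (real^4) set" where
  "Mspace \<rho> = (if \<rho> = 0 then {x. x$1 = 0}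
               else if \<rho> > 0 then {x. gform \<rho> x x = 1 / \<rho>}
               else {x. gform \<rho> x x = 1 / \<rho> \<and> x$1 > 0})"

definition Tsp :: "real \<Rightarrow> real^4 \<Rightarrow> (real^4) set" where
  "Tsp \<rho> p = (if \<rho> = 0 then {v. v$1 = 0} else {v. gform \<rho> v p = 0})"

definition vd :: "nat \<Rightarrow> (real \<Rightarrow> 'a::real_normed_vector) \<Rightarrow> real \<Rightarrow> 'a" where
  "vd k \<gamma> = ((\<lambda>f s. vector_derivative f (at s)) ^^ k) \<gamma>"

definition smooth_curve :: "real set \<Rightarrow> (real \<Rightarrow> 'a::real_normed_vector) \<Rightarrow> bool" where
  "smooth_curve I \<gamma> \<longleftrightarrow> (\<forall>k. \<forall>s\<in>I. vd k \<gamma> differentiable (at s))"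

text \<open>A complete unit-speed geodesic of M^3(rho) (the ambient acceleration is normal to M).\<close>
definition geodesic_line :: "real \<Rightarrow> (real \<Rightarrow> real^4) \<Rightarrow> bool" where
  "geodesic_line \<rho> \<beta> \<longleftrightarrow> smooth_curve UNIV \<beta> \<and> (\<forall>t. \<beta> t \<in> Mspace \<rho>) \<and>
     (\<forall>t. gform \<rho> (vd 1 \<beta> t) (vd 1 \<beta> t) = 1 \<and> vd 2 \<beta> t = (- \<rho>) *\<^sub>R \<beta> t)"

definition model_isometry :: "real \<Rightarrow> (real^4 \<Rightarrow> real^4) \<Rightarrow> bool" where
  "model_isometry \<rho> F \<longleftrightarrow>
     (\<exists>A :: real^4^4. \<exists>b. (\<forall>x. F x = A *v x + b) \<and>
        (\<forall>u v. gform \<rho> (A *v u) (A *v v) = gform \<rho> u v)) \<and> F ` Mspace \<rho> = Mspace \<rho>"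

definition rotation_group :: "real \<Rightarrow> (real \<Rightarrow> real^4 \<Rightarrow> real^4) \<Rightarrow> (real \<Rightarrow> real^4) \<Rightarrow> bool" where
  "rotation_group \<rho> \<Phi> \<beta> \<longleftrightarrow> geodesic_line \<rho> \<beta> \<and>
     (\<forall>t. model_isometry \<rho> (\<Phi> t)) \<and>
     (\<forall>x\<in>Mspace \<rho>. \<Phi> 0 x = x \<and> (\<forall>s t. \<Phi> (s + t) x = \<Phi> s (\<Phi> t x))) \<and>
     (\<forall>x\<in>Mspace \<rho>. smooth_curve UNIV (\<lambda>t. \<Phi> t x)) \<and>
     (\<forall>t y. y \<in> range \<beta> \<longrightarrow> \<Phi> t y = y) \<and>
     (\<exists>t. \<exists>x\<in>Mspace \<rho>. \<Phi> t x \<noteq> x)"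

definition tg_data :: "real \<Rightarrow> real^4 \<Rightarrow> real^4 \<Rightarrow> bool" where
  "tg_data \<rho> p w \<longleftrightarrow> p \<in> Mspace \<rho> \<and> w \<in> Tsp \<rho> p \<and> gform \<rho> w w = 1"

definition tg_surface :: "real \<Rightarrow> real^4 \<Rightarrow> real^4 \<Rightarrow> (real^4) set" where
  "tg_surface \<rho> p w = {x \<in> Mspace \<rho>. gform \<rho> w (x - p) = 0}"

definition pd_s :: "(real \<Rightarrow> real \<Rightarrow> real^4) \<Rightarrow> real \<Rightarrow> real \<Rightarrow> real^4" where
  "pd_s X s t = vector_derivative (\<lambda>s'. X s' t) (at s)"

definition pd_t :: "(real \<Rightarrow> real \<Rightarrow> real^4) \<Rightarrow> real \<Rightarrow> real \<Rightarrow> real^4" where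
  "pd_t X s t = vector_derivative (\<lambda>t'. X s t') (at t)"

definition unit_normal_field ::
  "real \<Rightarrow> (real \<Rightarrow> real \<Rightarrow> real^4) \<Rightarrow> (real \<Rightarrow> real \<Rightarrow> real^4) \<Rightarrow> (real \<times> real) set \<Rightarrow> bool" where
  "unit_normal_field \<rho> X n D \<longleftrightarrow> continuous_on D (\<lambda>(s,t). n s t) \<and>
     (\<forall>(s,t)\<in>D. n s t \<in> Tsp \<rho> (X s t) \<and> gform \<rho> (n s t) (n s t) = 1 \<and>
        gform \<rho> (n s t) (pd_s X s t) = 0 \<and> gform \<rho> (n s t) (pd_t X s t) = 0)"

definition fE where "fE \<rho> X s t = gform \<rho> (pd_s X s t) (pd_s X s t)"
definition fF where "fF \<rho> X s t = gform \<rho> (pd_s X s t) (pd_t X s t)"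
definition fG where "fG \<rho> X s t = gform \<rho> (pd_t X s t) (pd_t X s t)"
definition fe where "fe \<rho> X n s t = gform \<rho> (pd_s (pd_s X) s t) (n s t)"
definition ff where "ff \<rho> X n s t = gform \<rho> (pd_t (pd_s X) s t) (n s t)"
definition fg where "fg \<rho> X n s t = gform \<rho> (pd_t (pd_t X) s t) (n s t)"

definition mean_curv where
  "mean_curv \<rho> X n s t =
     (fe \<rho> X n s t * fG \<rho> X s t - 2 * ff \<rho> X n s t * fF \<rho> X s t + fg \<rho> X n s t * fE \<rho> X s t)
     / (2 * (fE \<rho> X s t * fG \<rho> X s t - (fF \<rho> X s t)^2))"

definition ext_curv where
  "ext_curv \<rho> X n s t =
     (fe \<rho> X n s t * fg \<rho> X n s t - (ff \<rho> X n s t)^2)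
     / (fE \<rho> X s t * fG \<rho> X s t - (fF \<rho> X s t)^2)"

definition kappa1 where
  "kappa1 \<rho> X n s t = mean_curv \<rho> X n s t + sqrt ((mean_curv \<rho> X n s t)^2 - ext_curv \<rho> X n s t)"
definition kappa2 where
  "kappa2 \<rho> X n s t = mean_curv \<rho> X n s t - sqrt ((mean_curv \<rho> X n s t)^2 - ext_curv \<rho> X n s t)"

definition gauss_curv where
  "gauss_curv \<rho> X n s t = kappa1 \<rho> X n s t * kappa2 \<rho> X n s t + \<rho>"

definition skew_curv where
  "skew_curv \<rho> X n s t = 2 * sqrt ((mean_curv \<rho> X n s t)^2 - gauss_curv \<rho> X n s t + \<rho>)"

definition isoparametric where
  "isoparametric \<rho> X n D \<longleftrightarrow>
     (\<exists>k1 k2. \<forall>(s,t)\<in>D. kappa1 \<rho> X n s t = k1 \<and> kappa2 \<rho> X n s t = k2)"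

end

(*
  Along the profile, the position normal ze of the model space, the unit tangent T, the velocity
  V = L (gamma - center) of the rotation orbits (L the skew generator of the rotations) and the unit
  normal nn of the surface form a gform-orthogonal frame.  Since L kills the axis, the profile is a
  line of curvature, and differentiating the frame relations gives a closed system for the
  principal curvatures k1 (along the profile) and k2 (along the orbits), G = <V, V> and
  h = <L V, T>:
    G' = -2 h,    k2' = h (k2 - k1) / G,    h' = rho G + k1 k2 G - h^2 / G.
  Constant skew curvature makes k1 - k2 = delta constant with |delta| = c, so k1' = -delta h / G.
  For the curvature kappa = -(delta / c) k1 of the profile with respect to the normal
  -(delta / c) nn and mu = -1/c this yields (exp (mu kappa))' = - h exp (mu kappa) / G and
  (exp (mu kappa))'' = - (rho + k1 k2) exp (mu kappa), which is the Euler-Lagrange equation because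
  k1^2 - delta k1 - k1 k2 = 0.
*)

theory Submission
  imports Defs
begin

section \<open>The bilinear form of the model spaces\<close>

lemma gform_commute: "gform r x y = gform r y x"
  by (simp add: gform_def algebra_simps)

lemma bounded_bilinear_gform: "bounded_bilinear (gform r)"
proof -
  have "bilinear (gform r)"
    unfolding bilinear_def by (auto intro!: linearI simp: gform_def algebra_simps)
  then show ?thesis by (simp add: bilinear_conv_bounded_bilinear)
qed

interpretation gform: bounded_bilinear "gform r" for r
  by (rule bounded_bilinear_gform)

declare gform.zero_left [simp] gform.zero_right [simp]

lemmas gform_linear = gform.add_left gform.add_right gform.diff_left gform.diff_right
  gform.scaleR_left gform.scaleR_right gform.minus_left gform.minus_right
  gform.zero_left gform.zero_right

lemma gform_flat_eq_inner: "gform 0 x y = x \<bullet> y"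
  by (simp add: gform_def inner_vec_def sum_4)

lemma gform_flat_axis1: "gform 0 x (axis 1 1) = x $ 1"
  by (simp add: gform_def axis_def)

lemma gform_axis:
  "gform r (axis 1 1) y = (if r < 0 then - y $ 1 else y $ 1)"
  "gform r (axis 2 1) y = y $ 2" "gform r (axis 3 1) y = y $ 3" "gform r (axis 4 1) y = y $ 4"
  by (simp_all add: gform_def axis_def)

lemma gform_nondegenerate:
  assumes "\<And>u. gform r u y = 0"
  shows "y = 0"
proof -
  have "y $ 1 = 0" "y $ 2 = 0" "y $ 3 = 0" "y $ 4 = 0"
    using assms gform_axis[of r y] by (metis neg_equal_0_iff_equal)+
  then show ?thesis
    by (simp add: vec_eq_iff forall_4)
qed

definition orthogonal_frame :: "real \<Rightarrow> real^4 \<Rightarrow> real^4 \<Rightarrow> real^4 \<Rightarrow> real^4 \<Rightarrow> bool" where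
  "orthogonal_frame r a b c d \<longleftrightarrow>
     gform r a b = 0 \<and> gform r a c = 0 \<and> gform r a d = 0 \<and>
     gform r b c = 0 \<and> gform r b d = 0 \<and> gform r c d = 0 \<and>
     gform r a a \<noteq> 0 \<and> gform r b b \<noteq> 0 \<and> gform r c c \<noteq> 0 \<and> gform r d d \<noteq> 0"

lemma orthogonal_frameD:
  assumes "orthogonal_frame r a b c d"
  shows "gform r a b = 0" "gform r a c = 0" "gform r a d = 0" "gform r b c = 0" "gform r b d = 0"
    "gform r c d = 0" "gform r b a = 0" "gform r c a = 0" "gform r d a = 0" "gform r c b = 0"
    "gform r d b = 0" "gform r d c = 0"
    "gform r a a \<noteq> 0" "gform r b b \<noteq> 0" "gform r c c \<noteq> 0" "gform r d d \<noteq> 0"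
proof -
  show *: "gform r a b = 0" "gform r a c = 0" "gform r a d = 0" "gform r b c = 0" "gform r b d = 0"
    "gform r c d = 0" "gform r a a \<noteq> 0" "gform r b b \<noteq> 0" "gform r c c \<noteq> 0" "gform r d d \<noteq> 0"
    using assms unfolding orthogonal_frame_def by auto
  show "gform r b a = 0" "gform r c a = 0" "gform r d a = 0" "gform r c b = 0" "gform r d b = 0"
    "gform r d c = 0"
    using * gform_commute by metis+
qed

lemma gform_sum_orthogonal:
  assumes "finite S" "pairwise (\<lambda>u v. gform r u v = 0) S" "v \<in> S"
  shows "gform r (\<Sum>w\<in>S. u w *\<^sub>R w) v = u v * gform r v v"
proof -
  have "gform r (\<Sum>w\<in>S. u w *\<^sub>R w) v = (\<Sum>w\<in>S. u w * gform r w v)"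
    by (simp add: gform.sum_left gform.scaleR_left)
  also have "\<dots> = u v * gform r v v"
    using assms by (subst sum.remove[of S v]) (auto intro!: sum.neutral simp: pairwise_def)
  finally show ?thesis .
qed

lemma gform_orthogonal_independent:
  assumes "finite S" "pairwise (\<lambda>u v. gform r u v = 0) S" "\<And>v. v \<in> S \<Longrightarrow> gform r v v \<noteq> 0"
  shows "independent S"
proof (rule independent_if_scalars_zero[OF \<open>finite S\<close>])
  fix u v assume "(\<Sum>w\<in>S. u w *\<^sub>R w) = 0" "v \<in> S"
  then show "u v = 0"
    using gform_sum_orthogonal[OF assms(1,2) \<open>v \<in> S\<close>, of u] assms(3)[of v] by simp
qed

lemma gform_orthogonal_expansion:
  assumes "finite S" "pairwise (\<lambda>u v. gform r u v = 0) S" "\<And>v. v \<in> S \<Longrightarrow> gform r v v \<noteq> 0"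
    and "z \<in> span S"
  shows "z = (\<Sum>v\<in>S. (gform r z v / gform r v v) *\<^sub>R v)"
proof -
  obtain u where z: "z = (\<Sum>v\<in>S. u v *\<^sub>R v)"
    using \<open>z \<in> span S\<close> span_finite[OF \<open>finite S\<close>] by auto
  have "u v = gform r z v / gform r v v" if "v \<in> S" for v
    using gform_sum_orthogonal[OF assms(1,2) that, of u] assms(3)[OF that] z by simp
  then show ?thesis
    using z by (auto intro: sum.cong)
qed

lemma orthogonal_frame_expansion:
  assumes "orthogonal_frame r a b c d"
  shows "z = (gform r z a / gform r a a) *\<^sub>R a + (gform r z b / gform r b b) *\<^sub>R b +
             (gform r z c / gform r c c) *\<^sub>R c + (gform r z d / gform r d d) *\<^sub>R d"
proof -
  let ?S = "{a, b, c, d}"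
  note frame = orthogonal_frameD[OF assms]
  have distinct: "a \<noteq> b" "a \<noteq> c" "a \<noteq> d" "b \<noteq> c" "b \<noteq> d" "c \<noteq> d"
    using frame(1-6,13-16) by auto
  have orth: "pairwise (\<lambda>u v. gform r u v = 0) ?S"
    using frame(1-12) by (auto simp: pairwise_insert)
  have nonnull: "\<And>v. v \<in> ?S \<Longrightarrow> gform r v v \<noteq> 0"
    using frame(13-16) by blast
  have "independent ?S"
    using gform_orthogonal_independent[OF _ orth nonnull] by simp
  moreover have "card ?S = DIM(real^4)"
    using distinct by simp
  ultimately have "span ?S = UNIV"
    using card_eq_dim[of ?S UNIV] by (auto simp: dim_UNIV)
  then have "z = (\<Sum>v\<in>?S. (gform r z v / gform r v v) *\<^sub>R v)"
    using gform_orthogonal_expansion[OF _ orth nonnull] by simp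
  then show ?thesis
    using distinct by (simp add: add.assoc)
qed

lemma exists_unit_orthogonal_real4:
  fixes a b c :: "real^4"
  obtains v where "v \<bullet> a = 0" "v \<bullet> b = 0" "v \<bullet> c = 0" "norm v = 1"
proof -
  have "dim {a, b, c} \<le> card {a, b, c}"
    by (rule dim_le_card') simp
  also have "\<dots> < DIM(real^4)"
    by (simp add: card_insert_if)
  finally obtain x :: "real^4" where "x \<noteq> 0" and x: "\<And>y. y \<in> span {a, b, c} \<Longrightarrow> orthogonal x y"
    using orthogonal_to_subspace_exists by blast
  show thesis
    using x[of a] x[of b] x[of c] \<open>x \<noteq> 0\<close>
    by (intro that[of "(1 / norm x) *\<^sub>R x"]) (auto simp: orthogonal_def span_base)
qed

lemma has_real_derivative_gform:
  assumes "(a has_vector_derivative a') (at s within S)" "(b has_vector_derivative b') (at s within S)"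
  shows "((\<lambda>s. gform r (a s) (b s)) has_real_derivative gform r (a s) b' + gform r a' (b s)) (at s within S)"
  using gform.has_vector_derivative[OF assms] by (simp add: has_real_derivative_iff_has_vector_derivative)

lemma gform_const_derivative_sum_eq_0:
  assumes "open I" "s \<in> I" "\<And>x. x \<in> I \<Longrightarrow> gform r (a x) (b x) = k"
    and "(a has_vector_derivative a') (at s)" "(b has_vector_derivative b') (at s)"
  shows "gform r (a s) b' + gform r a' (b s) = 0"
proof -
  have "((\<lambda>x. gform r (a x) (b x)) has_real_derivative 0) (at s)"
    by (rule has_field_derivative_transform_within_open[of "\<lambda>_. k" _ _ I]) (use assms in auto)
  then show ?thesis
    using DERIV_unique has_real_derivative_gform[OF assms(4,5)] by blast
qed

lemma differentiable_gform [derivative_intros]: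
  "f differentiable (at x within S) \<Longrightarrow> g differentiable (at x within S) \<Longrightarrow>
    (\<lambda>x. gform r (f x) (g x)) differentiable (at x within S)"
  unfolding differentiable_def by (blast intro: gform.FDERIV)

lemma sqrt_differentiable: "x > 0 \<Longrightarrow> sqrt differentiable (at x)"
  unfolding differentiable_def using DERIV_real_sqrt has_field_derivative_imp_has_derivative by blast

lemma differentiable_gform_normalized:
  assumes "N differentiable (at s)" "gform r (N s) (N s) > 0"
  shows "(\<lambda>s. inverse (sqrt (gform r (N s) (N s))) *\<^sub>R N s) differentiable (at s)"
proof -
  have "(\<lambda>s. sqrt (gform r (N s) (N s))) differentiable (at s)"
    using differentiable_compose[OF sqrt_differentiable differentiable_gform[OF assms(1,1)]] assms(2) .
  with assms show ?thesis
    by simp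
qed

lemma differentiable_transform_within_open:
  assumes "f differentiable (at x)" "open U" "x \<in> U" "\<And>y. y \<in> U \<Longrightarrow> f y = g y"
  shows "g differentiable (at x)"
proof -
  obtain D where "(f has_derivative D) (at x)"
    using assms(1) unfolding differentiable_def by blast
  then have "(g has_derivative D) (at x)"
    by (rule has_derivative_transform_within_open[OF _ assms(2-4)])
  then show ?thesis
    unfolding differentiable_def by blast
qed

text \<open>Up to a positive factor the normal is the projection of one fixed vector orthogonally to the
  other three frame vectors, which is differentiable.\<close>

lemma orthogonal_frame_unit_normal_differentiable:
  fixes a b c n :: "real \<Rightarrow> real^4"
  assumes "open I" "s0 \<in> I" "continuous_on I n"
    and diff: "\<And>s. s \<in> I \<Longrightarrow> a differentiable (at s) \<and> b differentiable (at s) \<and> c differentiable (at s)"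
    and frame: "\<And>s. s \<in> I \<Longrightarrow> orthogonal_frame r (a s) (b s) (c s) (n s)"
    and unit: "\<And>s. s \<in> I \<Longrightarrow> gform r (n s) (n s) = 1"
  shows "n differentiable (at s0)"
proof -
  define n0 where "n0 = n s0"
  define N where "N s = n0 - (gform r n0 (a s) / gform r (a s) (a s)) *\<^sub>R a s
      - (gform r n0 (b s) / gform r (b s) (b s)) *\<^sub>R b s
      - (gform r n0 (c s) / gform r (c s) (c s)) *\<^sub>R c s" for s
  have N_diff: "N differentiable (at s)" if "s \<in> I" for s
    unfolding N_def using diff[OF that] orthogonal_frameD[OF frame[OF that]]
    by (intro derivative_intros) auto
  define lam where "lam s = gform r (N s) (n s)" for s
  have N_eq: "N s = lam s *\<^sub>R n s" if "s \<in> I" for s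
  proof -
    have "gform r (N s) (a s) = 0" "gform r (N s) (b s) = 0" "gform r (N s) (c s) = 0"
      unfolding N_def using orthogonal_frameD[OF frame[OF that]] by (simp_all add: gform_linear)
    then show ?thesis
      using orthogonal_frame_expansion[OF frame[OF that], of "N s"] unit[OF that] by (simp add: lam_def)
  qed
  have "continuous_on I N"
    by (intro continuous_at_imp_continuous_on ballI differentiable_imp_continuous_within N_diff)
  then have lam_cont: "continuous_on I lam"
    unfolding lam_def by (intro gform.continuous_on \<open>continuous_on I n\<close>)
  have "lam s0 = 1"
    using orthogonal_frameD[OF frame[OF \<open>s0 \<in> I\<close>]] unit[OF \<open>s0 \<in> I\<close>]
    by (simp add: lam_def N_def n0_def gform_linear)
  define U where "U = lam -` {0<..} \<inter> I"
  have U: "open U" "s0 \<in> U" "U \<subseteq> I" and pos: "\<And>s. s \<in> U \<Longrightarrow> lam s > 0"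
    using continuous_on_open_vimage[OF \<open>open I\<close>, THEN iffD1, OF lam_cont] \<open>s0 \<in> I\<close> \<open>lam s0 = 1\<close>
    unfolding U_def by auto
  have n_eq: "n s = inverse (sqrt (gform r (N s) (N s))) *\<^sub>R N s" if "s \<in> U" for s
  proof -
    have "gform r (N s) (N s) = (lam s)\<^sup>2"
      using N_eq unit U(3) that by (simp add: gform_linear power2_eq_square subset_iff)
    then show ?thesis
      using N_eq U(3) pos[OF that] that by auto
  qed
  have "gform r (N s0) (N s0) = 1"
    using N_eq[OF \<open>s0 \<in> I\<close>] unit[OF \<open>s0 \<in> I\<close>] \<open>lam s0 = 1\<close> by simp
  then have "(\<lambda>s. inverse (sqrt (gform r (N s) (N s))) *\<^sub>R N s) differentiable (at s0)"
    using differentiable_gform_normalized[OF N_diff[OF \<open>s0 \<in> I\<close>]] by simp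
  then show ?thesis
    by (rule differentiable_transform_within_open[OF _ U(1,2)]) (simp add: n_eq)
qed

section \<open>Points and isometries of the model spaces\<close>

lemma Mspace_flat: "r = 0 \<Longrightarrow> Mspace r = {x. x $ 1 = 0}"
  by (simp add: Mspace_def)

lemma Mspace_curved_norm: "x \<in> Mspace r \<Longrightarrow> r \<noteq> 0 \<Longrightarrow> gform r x x = 1 / r"
  by (auto simp: Mspace_def split: if_splits)

lemma sphere_point_in_Mspace:
  assumes "r > 0"
  shows "sqrt (1 / r) *\<^sub>R axis i 1 \<in> Mspace r"
proof -
  have "gform r (axis i 1) (axis i 1) = 1"
    using assms exhaust_4[of i] by (auto simp: gform_def axis_def)
  then show ?thesis
    using assms by (simp add: Mspace_def gform_linear)
qed

lemma hyperboloid_vertex_in_Mspace: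
  assumes "r < 0"
  shows "sqrt (- 1 / r) *\<^sub>R axis 1 1 \<in> Mspace r"
proof -
  have "gform r (axis 1 1) (axis 1 1) = - 1"
    using assms by (simp add: gform_def axis_def)
  moreover have "sqrt (- 1 / r) > 0"
    using assms by (simp add: divide_neg_neg)
  ultimately show ?thesis
    using assms by (simp add: Mspace_def gform_linear axis_def)
qed

lemma hyperboloid_point_in_Mspace:
  assumes "r < 0" "j \<noteq> 1" "\<sigma> = 1 \<or> \<sigma> = - 1"
  shows "sqrt (- 1 / r) *\<^sub>R (sqrt 2 *\<^sub>R axis 1 1 + \<sigma> *\<^sub>R axis j 1) \<in> Mspace r"
proof -
  define R where "R = sqrt (- 1 / r)"
  have R: "R > 0" "R * R = - 1 / r"
    using assms unfolding R_def by (simp_all add: divide_neg_neg)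
  define z :: "real^4" where "z = sqrt 2 *\<^sub>R axis 1 1 + \<sigma> *\<^sub>R axis j 1"
  have "gform r z z = - 1"
    using assms exhaust_4[of j] by (auto simp: z_def gform_def axis_def)
  moreover have "gform r (R *\<^sub>R z) (R *\<^sub>R z) = (R * R) * gform r z z"
    by (simp add: gform_linear)
  ultimately have "gform r (R *\<^sub>R (sqrt 2 *\<^sub>R axis 1 1 + \<sigma> *\<^sub>R axis j 1))
      (R *\<^sub>R (sqrt 2 *\<^sub>R axis 1 1 + \<sigma> *\<^sub>R axis j 1)) = 1 / r"
    using R by (simp add: z_def)
  moreover have "(R *\<^sub>R (sqrt 2 *\<^sub>R axis 1 1 + \<sigma> *\<^sub>R axis j (1::real)) :: real^4) $ 1 > 0"
    using R assms(2) by (simp add: axis_def assms(2)[symmetric])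
  ultimately show ?thesis
    using assms unfolding R_def[symmetric] by (simp add: Mspace_def)
qed

lemma span_Mspace:
  assumes "r \<noteq> 0"
  shows "span (Mspace r) = UNIV"
proof -
  have axis: "axis i 1 \<in> span (Mspace r)" for i
  proof (cases "r > 0")
    case True
    have "(1 / sqrt (1 / r)) *\<^sub>R (sqrt (1 / r) *\<^sub>R axis i 1) \<in> span (Mspace r)"
      by (intro span_mul span_base sphere_point_in_Mspace True)
    with True show ?thesis by simp
  next
    case False
    with assms have r: "r < 0" by simp
    define R where "R = sqrt (- 1 / r)"
    have "R > 0"
      using r by (simp add: R_def divide_neg_neg)
    have "(1 / R) *\<^sub>R (R *\<^sub>R axis 1 1) \<in> span (Mspace r)"
      unfolding R_def by (intro span_mul span_base hyperboloid_vertex_in_Mspace r)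
    then have e1: "axis 1 1 \<in> span (Mspace r)"
      using \<open>R > 0\<close> by simp
    show ?thesis
    proof (cases "i = 1")
      case False
      have "(1 / R) *\<^sub>R (R *\<^sub>R (sqrt 2 *\<^sub>R axis 1 1 + 1 *\<^sub>R axis i 1)) - sqrt 2 *\<^sub>R axis 1 1
          \<in> span (Mspace r)"
        unfolding R_def
        by (intro span_diff span_mul span_base hyperboloid_point_in_Mspace r False e1) simp
      with \<open>R > 0\<close> show ?thesis by simp
    qed (use e1 in simp)
  qed
  have "Basis \<subseteq> span (Mspace r)"
    using axis by (auto simp: Basis_vec_def)
  then show ?thesis
    using span_minimal[OF _ subspace_span] span_Basis by blast
qed

lemma linear_constant_on_Mspace_value_eq_0:
  fixes l :: "real^4 \<Rightarrow> real"
  assumes "linear l" "r \<noteq> 0" and const: "\<And>x. x \<in> Mspace r \<Longrightarrow> l x = C"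
  shows "C = 0"
proof (cases "r > 0")
  case True
  define p :: "real^4" where "p = sqrt (1 / r) *\<^sub>R axis 1 1"
  have "p \<in> Mspace r" "- p \<in> Mspace r"
    using sphere_point_in_Mspace[OF True] sphere_point_in_Mspace[OF True, of 1]
    by (auto simp: p_def Mspace_def gform_linear)
  then show ?thesis
    using const linear_neg[OF \<open>linear l\<close>, of p] by force
next
  case False
  with assms have r: "r < 0" by simp
  define R where "R = sqrt (- 1 / r)"
  define q :: "real \<Rightarrow> real^4" where "q \<sigma> = R *\<^sub>R (sqrt 2 *\<^sub>R axis 1 1 + \<sigma> *\<^sub>R axis 2 1)" for \<sigma>
  have "q 1 + q (- 1) = (2 * sqrt 2) *\<^sub>R (R *\<^sub>R axis 1 1)"
    by (simp add: q_def vec_eq_iff algebra_simps)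
  then have "l (q 1 + q (- 1)) = l ((2 * sqrt 2) *\<^sub>R (R *\<^sub>R axis 1 1))"
    by (rule arg_cong)
  then have "l (q 1) + l (q (- 1)) = 2 * sqrt 2 * l (R *\<^sub>R axis 1 1)"
    by (simp only: linear_add[OF \<open>linear l\<close>] linear_scale[OF \<open>linear l\<close>] real_scaleR_def)
  moreover have "l (q 1) = C" "l (q (- 1)) = C" "l (R *\<^sub>R axis 1 1) = C"
    using const[OF hyperboloid_point_in_Mspace[OF r, of 2 1]]
      const[OF hyperboloid_point_in_Mspace[OF r, of 2 "- 1"]]
      const[OF hyperboloid_vertex_in_Mspace[OF r]]
    by (simp_all add: q_def R_def)
  ultimately have "(sqrt 2 - 1) * C = 0"
    by (simp add: algebra_simps)
  then show ?thesis
    by simp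
qed

lemma linear_constant_on_Mspace_eq_0:
  fixes l :: "real^4 \<Rightarrow> real"
  assumes "linear l" "r \<noteq> 0" and const: "\<And>x. x \<in> Mspace r \<Longrightarrow> l x = C"
  shows "l v = 0"
proof -
  have "subspace {x. l x = 0}"
    using \<open>linear l\<close> by (auto simp: subspace_def linear_add linear_scale linear_0)
  moreover have "Mspace r \<subseteq> {x. l x = 0}"
    using const linear_constant_on_Mspace_value_eq_0[OF assms] by auto
  ultimately have "span (Mspace r) \<subseteq> {x. l x = 0}"
    by (rule span_minimal[rotated])
  then show ?thesis
    using span_Mspace[OF \<open>r \<noteq> 0\<close>] by auto
qed

lemma Mspace_isometry_fixes_origin:
  fixes A :: "real^4^4"
  assumes "r \<noteq> 0" and isometric: "\<And>u v. gform r (A *v u) (A *v v) = gform r u v"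
    and maps: "\<And>x. x \<in> Mspace r \<Longrightarrow> A *v x + b \<in> Mspace r"
  shows "b = 0"
proof -
  note norm_M = Mspace_curved_norm[OF _ \<open>r \<noteq> 0\<close>]
  have "gform r (A *v x) b = - gform r b b / 2" if "x \<in> Mspace r" for x
  proof -
    have "gform r (A *v x + b) (A *v x + b) = gform r (A *v x) (A *v x) + 2 * gform r (A *v x) b + gform r b b"
      by (simp add: gform_linear gform_commute[of r b "A *v x"])
    then show ?thesis
      using norm_M[OF that] norm_M[OF maps[OF that]] isometric by simp
  qed
  moreover have "linear (\<lambda>x. gform r (A *v x) b)"
    by (intro linearI) (simp_all add: matrix_vector_right_distrib matrix_vector_mult_scaleR gform_linear)
  ultimately have l0: "gform r (A *v x) b = 0" for x
    using linear_constant_on_Mspace_eq_0[OF _ \<open>r \<noteq> 0\<close>] by blast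
  have "inj ((*v) A)"
  proof (rule injI)
    fix x y assume "A *v x = A *v y"
    then have "gform r u (x - y) = 0" for u
      using isometric[of u "x - y"] by (simp add: matrix_vector_mult_diff_distrib)
    then show "x = y"
      using gform_nondegenerate[of r "x - y"] by simp
  qed
  then have "surj ((*v) A)"
    by (rule linear_injective_imp_surjective[OF matrix_vector_mul_linear]) (simp add: dim_UNIV)
  then obtain y where y: "b = A *v y"
    by (metis surj_def)
  have "gform r u y = 0" for u
    using l0[of u] isometric[of u y] by (simp add: y)
  then show ?thesis
    using gform_nondegenerate[of r y] y by simp
qed

section \<open>One-parameter groups of rotations\<close>

lemma vec_nth_derivative_eq_0:
  fixes f :: "real \<Rightarrow> 'a::real_normed_vector ^ 'n"
  assumes "open I" "s \<in> I" "\<And>x. x \<in> I \<Longrightarrow> f x $ i = 0" "(f has_vector_derivative f') (at s)"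
  shows "f' $ i = 0"
proof -
  have "((\<lambda>x. f x $ i) has_vector_derivative f' $ i) (at s)"
    using bounded_linear.has_vector_derivative[OF bounded_linear_vec_nth assms(4)] .
  moreover have "((\<lambda>x. f x $ i) has_vector_derivative 0) (at s)"
    by (rule has_vector_derivative_transform_within_open[OF _ assms(1,2)]) (use assms(3) in auto)
  ultimately show ?thesis
    using vector_derivative_unique_at by blast
qed

lemma vd_0: "vd 0 f = f"
  by (simp add: vd_def)

lemma vd_Suc: "vd (Suc k) f s = vector_derivative (vd k f) (at s)"
  by (simp add: vd_def)

lemma smooth_curve_has_vector_derivative:
  "smooth_curve I \<gamma> \<Longrightarrow> s \<in> I \<Longrightarrow> (vd k \<gamma> has_vector_derivative vd (Suc k) \<gamma> s) (at s)"
  unfolding smooth_curve_def vd_Suc using vector_derivative_works by blast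

text \<open>The rotations Phi t fix the point center of the axis (the origin of real^4 when rho is not 0),
  so rot t is their linear part, an isometry of gform; W is the linear space parallel to Mspace rho.
  On vectors outside W the map t \<mapsto> rot t v need not be differentiable, so the infinitesimal
  generator gen is extended to real^4 through the projection proj onto W.\<close>

locale rotation =
  fixes \<rho> :: real and \<Phi> :: "real \<Rightarrow> real^4 \<Rightarrow> real^4" and \<beta> :: "real \<Rightarrow> real^4"
  assumes rotation_group: "rotation_group \<rho> \<Phi> \<beta>"
begin

definition center :: "real^4" where "center = (if \<rho> = 0 then \<beta> 0 else 0)"
definition W :: "(real^4) set" where "W = (if \<rho> = 0 then {v. v $ 1 = 0} else UNIV)"
definition rot :: "real \<Rightarrow> real^4 \<Rightarrow> real^4" where "rot t v = \<Phi> t (v + center) - center"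
definition proj :: "real^4 \<Rightarrow> real^4" where "proj v = (if \<rho> = 0 then v - (v $ 1) *\<^sub>R axis 1 1 else v)"
definition gen :: "real^4 \<Rightarrow> real^4" where "gen v = vector_derivative (\<lambda>t. rot t (proj v)) (at 0)"

lemma model_isometry_Phi: "model_isometry \<rho> (\<Phi> t)"
  using rotation_group by (simp add: rotation_group_def)

lemma Phi_in_Mspace: "x \<in> Mspace \<rho> \<Longrightarrow> \<Phi> t x \<in> Mspace \<rho>"
  using model_isometry_Phi[of t] unfolding model_isometry_def by blast

lemma Phi_0: "x \<in> Mspace \<rho> \<Longrightarrow> \<Phi> 0 x = x"
  using rotation_group by (simp add: rotation_group_def)

lemma Phi_add: "x \<in> Mspace \<rho> \<Longrightarrow> \<Phi> (s + t) x = \<Phi> s (\<Phi> t x)"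
  using rotation_group by (simp add: rotation_group_def)

lemma Phi_axis: "\<Phi> t (\<beta> h) = \<beta> h"
  using rotation_group by (simp add: rotation_group_def)

lemma geodesic_axis: "geodesic_line \<rho> \<beta>"
  using rotation_group by (simp add: rotation_group_def)

lemma axis_in_Mspace: "\<beta> h \<in> Mspace \<rho>"
  using geodesic_axis by (simp add: geodesic_line_def)

lemma axis_deriv: "(\<beta> has_vector_derivative vd 1 \<beta> t) (at t)"
  using smooth_curve_has_vector_derivative[of UNIV \<beta> t 0] geodesic_axis
  by (simp add: geodesic_line_def vd_0)

lemma axis_unit_speed: "gform \<rho> (vd 1 \<beta> t) (vd 1 \<beta> t) = 1"
  using geodesic_axis by (simp add: geodesic_line_def)

lemma orbit_differentiable: "x \<in> Mspace \<rho> \<Longrightarrow> (\<lambda>t. \<Phi> t x) differentiable (at t)"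
  using rotation_group smooth_curve_has_vector_derivative[of UNIV "\<lambda>t. \<Phi> t x" t 0]
  by (auto simp: rotation_group_def vd_0 intro: differentiableI_vector)

lemma W_flat: "\<rho> = 0 \<Longrightarrow> W = {v. v $ 1 = 0}"
  unfolding W_def by simp

lemma W_curved: "\<rho> \<noteq> 0 \<Longrightarrow> W = UNIV"
  unfolding W_def by simp

lemma center_flat: "\<rho> = 0 \<Longrightarrow> center = \<beta> 0"
  unfolding center_def by simp

lemma center_curved: "\<rho> \<noteq> 0 \<Longrightarrow> center = 0"
  unfolding center_def by simp

lemma minus_center_in_W: "x \<in> Mspace \<rho> \<Longrightarrow> x - center \<in> W"
  using axis_in_Mspace[of 0] unfolding W_def center_def Mspace_def by auto

lemma plus_center_in_Mspace: "v \<in> W \<Longrightarrow> \<rho> = 0 \<Longrightarrow> v + center \<in> Mspace \<rho>"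
  using axis_in_Mspace[of 0] unfolding W_def center_def Mspace_def by auto

lemma rot_matrix:
  obtains A :: "real^4^4" where "\<And>v. rot t v = A *v v" "\<And>u v. gform \<rho> (A *v u) (A *v v) = gform \<rho> u v"
proof -
  obtain A b where Ab: "\<And>x. \<Phi> t x = A *v x + b"
    and isometric: "\<And>u v. gform \<rho> (A *v u) (A *v v) = gform \<rho> u v"
    using rotation_group unfolding rotation_group_def model_isometry_def by metis
  have "A *v center + b = center"
  proof (cases "\<rho> = 0")
    case True
    show ?thesis
      using Phi_axis[of t 0] Ab by (simp add: center_flat[OF True])
  next
    case False
    have "A *v x + b \<in> Mspace \<rho>" if "x \<in> Mspace \<rho>" for x
      using Phi_in_Mspace[OF that] Ab by metis
    then have "b = 0"
      using Mspace_isometry_fixes_origin[OF False isometric] by blast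
    with False show ?thesis
      by (simp add: center_curved)
  qed
  then have "rot t v = A *v v" for v
    unfolding rot_def Ab by (simp add: matrix_vector_right_distrib algebra_simps)
  with isometric show thesis
    using that by blast
qed

lemma linear_rot: "linear (rot t)"
  by (metis rot_matrix matrix_vector_mul_linear ext)

lemma bounded_linear_rot: "bounded_linear (rot t)"
  using linear_rot linear_conv_bounded_linear by blast

lemma gform_rot: "gform \<rho> (rot t u) (rot t v) = gform \<rho> u v"
  by (metis rot_matrix)

lemma rot_in_W: "v \<in> W \<Longrightarrow> rot t v \<in> W"
proof (cases "\<rho> = 0")
  case True
  assume "v \<in> W"
  then have "\<Phi> t (v + center) \<in> Mspace \<rho>"
    by (intro Phi_in_Mspace plus_center_in_Mspace True)
  then show ?thesis
    using axis_in_Mspace[of 0] by (simp add: rot_def W_flat[OF True] center_flat[OF True] Mspace_flat[OF True])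
qed (simp add: W_curved)

lemma rot_differentiable:
  assumes "v \<in> W"
  shows "(\<lambda>t. rot t v) differentiable (at 0)" "rot 0 v = v"
proof -
  define P where "P = {v. (\<lambda>t. rot t v) differentiable (at 0) \<and> rot 0 v = v}"
  have "subspace P"
    unfolding subspace_def P_def
    by (simp add: linear_0[OF linear_rot] linear_add[OF linear_rot] linear_scale[OF linear_rot])
  have orbit: "x - center \<in> P" if "x \<in> Mspace \<rho>" for x
    using orbit_differentiable[OF that] Phi_0[OF that] by (simp add: P_def rot_def)
  have "v \<in> P"
  proof (cases "\<rho> = 0")
    case True
    then show ?thesis
      using orbit[OF plus_center_in_Mspace[OF assms True]] by simp
  next
    case False
    then have "Mspace \<rho> \<subseteq> P"
      using orbit by (simp add: center_curved subset_iff)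
    then show ?thesis
      using span_minimal[OF _ \<open>subspace P\<close>] span_Mspace[OF False] by blast
  qed
  then show "(\<lambda>t. rot t v) differentiable (at 0)" "rot 0 v = v"
    by (simp_all add: P_def)
qed

lemma proj_in_W: "proj v \<in> W"
  by (simp add: proj_def W_def axis_def)

lemma proj_id: "v \<in> W \<Longrightarrow> proj v = v"
  by (auto simp: proj_def W_def)

lemma linear_proj: "linear proj"
  by (intro linearI) (auto simp: proj_def algebra_simps)

lemma has_vector_derivative_rot: "v \<in> W \<Longrightarrow> ((\<lambda>t. rot t v) has_vector_derivative gen v) (at 0)"
  using vector_derivative_works[THEN iffD1, OF rot_differentiable(1)] unfolding gen_def by (simp add: proj_id)

lemma gen_proj: "gen (proj v) = gen v"
  by (simp add: gen_def proj_id[OF proj_in_W])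

lemma linear_gen: "linear gen"
proof (rule linearI)
  fix u v
  have "((\<lambda>t. rot t (proj (u + v))) has_vector_derivative gen u + gen v) (at 0)"
    using has_vector_derivative_add[OF has_vector_derivative_rot has_vector_derivative_rot, OF proj_in_W proj_in_W]
    by (simp add: linear_add[OF linear_proj] linear_add[OF linear_rot] gen_proj)
  then show "gen (u + v) = gen u + gen v"
    using has_vector_derivative_rot[OF proj_in_W, of "u + v"] vector_derivative_unique_at
    by (metis gen_proj)
next
  fix a u
  have "((\<lambda>t. rot t (proj (a *\<^sub>R u))) has_vector_derivative a *\<^sub>R gen u) (at 0)"
    using has_vector_derivative_scaleR[OF DERIV_const has_vector_derivative_rot[OF proj_in_W], of a u]
    by (simp add: linear_scale[OF linear_proj] linear_scale[OF linear_rot] gen_proj)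
  then show "gen (a *\<^sub>R u) = a *\<^sub>R gen u"
    using has_vector_derivative_rot[OF proj_in_W, of "a *\<^sub>R u"] vector_derivative_unique_at
    by (metis gen_proj)
qed

lemma bounded_linear_gen: "bounded_linear gen"
  using linear_gen linear_conv_bounded_linear by blast

lemma gen_in_W: "gen v \<in> W"
proof (cases "\<rho> = 0")
  case True
  have "rot t (proj v) $ 1 = 0" for t
    using rot_in_W[OF proj_in_W] by (simp add: W_flat[OF True])
  then show ?thesis
    using vec_nth_derivative_eq_0[OF open_UNIV UNIV_I _ has_vector_derivative_rot[OF proj_in_W]]
    by (simp add: W_flat[OF True] gen_proj)
qed (simp add: W_curved)

lemma gform_W_proj: "u \<in> W \<Longrightarrow> gform \<rho> u (proj v) = gform \<rho> u v"
  unfolding proj_def W_def by (auto simp: gform_linear gform_flat_axis1)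

lemma gen_skew: "gform \<rho> (gen u) v = - gform \<rho> u (gen v)"
proof -
  have skew_W: "gform \<rho> (gen u) v = - gform \<rho> u (gen v)" if "u \<in> W" "v \<in> W" for u v
  proof -
    have "gform \<rho> (rot 0 u) (gen v) + gform \<rho> (gen u) (rot 0 v) = 0"
      by (rule gform_const_derivative_sum_eq_0[OF open_UNIV UNIV_I _
            has_vector_derivative_rot[OF that(1)] has_vector_derivative_rot[OF that(2)]])
        (rule gform_rot)
    with that show ?thesis
      using rot_differentiable(2) by simp
  qed
  have "gform \<rho> (gen u) v = gform \<rho> (gen (proj u)) (proj v)"
    by (simp add: gen_proj gform_W_proj[OF gen_in_W])
  also have "\<dots> = - gform \<rho> (proj u) (gen (proj v))"
    by (rule skew_W[OF proj_in_W proj_in_W])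
  also have "\<dots> = - gform \<rho> u (gen v)"
    using gform_W_proj[OF gen_in_W] by (simp add: gen_proj gform_commute[of \<rho> _ "gen v"])
  finally show ?thesis .
qed

lemma gen_axis_1:
  assumes "\<rho> = 0"
  shows "gen (axis 1 1) = 0"
proof -
  have "proj (axis 1 1) = 0"
    using assms unfolding proj_def by (simp add: axis_def)
  then show ?thesis
    using gen_proj[of "axis 1 1"] linear_0[OF linear_gen] by simp
qed

lemma orbit_has_vector_derivative:
  assumes "x \<in> Mspace \<rho>"
  shows "((\<lambda>t. \<Phi> t x) has_vector_derivative rot t (gen (x - center))) (at t)"
proof -
  have group: "\<Phi> t' x = rot t (rot (t' - t) (x - center)) + center" for t'
    using Phi_add[OF assms, of t "t' - t"] by (simp add: rot_def)
  have "((\<lambda>t'. t' - t) has_vector_derivative 1) (at t)"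
    by (auto intro!: derivative_eq_intros)
  from vector_diff_chain_at[OF this, of "\<lambda>h. rot h (x - center)"]
  have "((\<lambda>t'. rot (t' - t) (x - center)) has_vector_derivative gen (x - center)) (at t)"
    using has_vector_derivative_rot[OF minus_center_in_W[OF assms]] by (simp add: o_def)
  then have "((\<lambda>t'. rot t (rot (t' - t) (x - center)) + center) has_vector_derivative
      rot t (gen (x - center))) (at t)"
    unfolding has_vector_derivative_add_const by (rule bounded_linear.has_vector_derivative[OF bounded_linear_rot])
  then show ?thesis
    by (simp only: group)
qed

lemma gen_fixed:
  assumes "v \<in> W" "\<And>t. rot t v = v"
  shows "gen v = 0"
proof -
  have "((\<lambda>t. rot t v) has_vector_derivative 0) (at 0)"
    by (simp add: assms(2))
  then show ?thesis
    using vector_derivative_unique_at has_vector_derivative_rot[OF assms(1)] by blast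
qed

lemma axis_tangent_in_kernel: "vd 1 \<beta> 0 \<in> W" "gen (vd 1 \<beta> 0) = 0"
proof -
  show W: "vd 1 \<beta> 0 \<in> W"
  proof (cases "\<rho> = 0")
    case True
    show ?thesis
      using vec_nth_derivative_eq_0[OF open_UNIV UNIV_I _ axis_deriv] axis_in_Mspace
      by (simp add: W_flat[OF True] Mspace_flat[OF True])
  qed (simp add: W_curved)
  have "rot t (vd 1 \<beta> 0) = vd 1 \<beta> 0" for t
  proof -
    have "(\<lambda>h. rot t (\<beta> h - center)) = (\<lambda>h. \<beta> h - center)"
      by (simp add: rot_def Phi_axis)
    moreover have "((\<lambda>h. rot t (\<beta> h - center)) has_vector_derivative rot t (vd 1 \<beta> 0)) (at 0)"
      using bounded_linear.has_vector_derivative[OF bounded_linear_rot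
          has_vector_derivative_diff[OF axis_deriv has_vector_derivative_const]] by simp
    moreover have "((\<lambda>h. \<beta> h - center) has_vector_derivative vd 1 \<beta> 0) (at 0)"
      using has_vector_derivative_diff[OF axis_deriv has_vector_derivative_const] by simp
    ultimately show ?thesis
      using vector_derivative_unique_at by metis
  qed
  then show "gen (vd 1 \<beta> 0) = 0"
    by (rule gen_fixed[OF W])
qed

lemma axis_point_in_kernel:
  assumes "\<rho> \<noteq> 0"
  shows "gen (\<beta> 0) = 0" "gform \<rho> (\<beta> 0) (\<beta> 0) = 1 / \<rho>" "gform \<rho> (\<beta> 0) (vd 1 \<beta> 0) = 0"
proof -
  show "gen (\<beta> 0) = 0"
    by (rule gen_fixed) (simp_all add: W_curved[OF assms] rot_def center_curved[OF assms] Phi_axis)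
  show "gform \<rho> (\<beta> 0) (\<beta> 0) = 1 / \<rho>"
    using Mspace_curved_norm[OF axis_in_Mspace assms] .
  have "gform \<rho> (\<beta> 0) (vd 1 \<beta> 0) + gform \<rho> (vd 1 \<beta> 0) (\<beta> 0) = 0"
    by (rule gform_const_derivative_sum_eq_0[OF open_UNIV UNIV_I _ axis_deriv axis_deriv],
        rule Mspace_curved_norm[OF axis_in_Mspace assms])
  then show "gform \<rho> (\<beta> 0) (vd 1 \<beta> 0) = 0"
    using gform_commute[of \<rho> "vd 1 \<beta> 0"] by simp
qed

lemma gen_kernel_not_parallel:
  assumes "\<rho> = 0 \<Longrightarrow> z \<notin> W"
  obtains k where "k \<in> W" "gen k = 0" "\<And>a. k \<noteq> a *\<^sub>R z"
proof (cases "\<exists>b. vd 1 \<beta> 0 = b *\<^sub>R z")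
  case False
  with that show thesis
    using axis_tangent_in_kernel by blast
next
  case True
  then obtain b where b: "vd 1 \<beta> 0 = b *\<^sub>R z" ..
  have "b \<noteq> 0"
    using axis_unit_speed[of 0] b by auto
  show thesis
  proof (cases "\<rho> = 0")
    case True
    have "b *\<^sub>R z \<in> W"
      using axis_tangent_in_kernel(1) b by simp
    with \<open>b \<noteq> 0\<close> have "z \<in> W"
      by (simp add: W_flat[OF True])
    with assms[OF True] show thesis
      by blast
  next
    case False
    have "\<beta> 0 \<noteq> a *\<^sub>R z" for a
    proof
      assume "\<beta> 0 = a *\<^sub>R z"
      with b have "a * b * gform \<rho> z z = 0" "a * a * gform \<rho> z z = 1 / \<rho>"
        using axis_point_in_kernel[OF False] by (auto simp: gform_linear)
      with \<open>b \<noteq> 0\<close> \<open>\<rho> \<noteq> 0\<close> show False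
        by auto
    qed
    with that show thesis
      using axis_point_in_kernel(1)[OF False] by (simp add: W_curved[OF False])
  qed
qed

end

section \<open>The frame along the profile\<close>

definition exp_euler_lagrange :: "real \<Rightarrow> real \<Rightarrow> real set \<Rightarrow> (real \<Rightarrow> real) \<Rightarrow> bool" where
  "exp_euler_lagrange \<rho> \<mu> I \<kappa> \<longleftrightarrow>
     (\<exists>f1 f2 :: real \<Rightarrow> real. \<forall>s\<in>I.
        ((\<lambda>s. exp (\<mu> * \<kappa> s)) has_real_derivative f1 s) (at s) \<and>
        (f1 has_real_derivative f2 s) (at s) \<and>
        f2 s + ((\<kappa> s)\<^sup>2 - \<kappa> s / \<mu> + \<rho>) * exp (\<mu> * \<kappa> s) = 0)"

lemma exp_euler_lagrange_zero:
  assumes "open I" "\<And>s. s \<in> I \<Longrightarrow> \<kappa> s = 0"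
  shows "exp_euler_lagrange 0 \<mu> I \<kappa>"
proof -
  have "((\<lambda>s. exp (\<mu> * \<kappa> s)) has_real_derivative 0) (at s)" if "s \<in> I" for s
    by (rule has_field_derivative_transform_within_open[OF DERIV_const assms(1) that]) (simp add: assms(2))
  then show ?thesis
    unfolding exp_euler_lagrange_def using assms(2) by (intro exI[of _ "\<lambda>_. 0"]) auto
qed

text \<open>Abstract form of the frame along the profile gamma: ze is the position normal of the model
  space, T and Y are the first and second derivatives of gamma, V = L (gamma - center) is the
  velocity of the orbits of the skew generator L, nn is the unit normal of the surface and w that of
  the totally geodesic surface containing gamma.\<close>

locale profile_frame =
  fixes \<rho> c :: real and I :: "real set" and w :: "real^4"
    and ze T Y V nn :: "real \<Rightarrow> real^4" and L :: "real^4 \<Rightarrow> real^4"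
  assumes open_I: "open I" and interval_I: "is_interval I" and nonempty_I: "I \<noteq> {}"
    and c_pos: "c > 0"
    and linear_L: "linear L"
    and L_skew: "\<And>u v. gform \<rho> (L u) v = - gform \<rho> u (L v)"
    and ze_deriv: "\<And>s. s \<in> I \<Longrightarrow> (ze has_vector_derivative (if \<rho> = 0 then 0 else T s)) (at s)"
    and T_deriv: "\<And>s. s \<in> I \<Longrightarrow> (T has_vector_derivative Y s) (at s)"
    and Y_cont: "continuous_on I Y"
    and V_deriv: "\<And>s. s \<in> I \<Longrightarrow> (V has_vector_derivative L (T s)) (at s)"
    and L_ze: "\<And>s. s \<in> I \<Longrightarrow> L (ze s) = (if \<rho> = 0 then 0 else V s)"
    and nn_cont: "continuous_on I nn"
    and frame: "\<And>s. s \<in> I \<Longrightarrow> orthogonal_frame \<rho> (ze s) (T s) (V s) (nn s)"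
    and ze_norm: "\<And>s. s \<in> I \<Longrightarrow> \<rho> \<noteq> 0 \<Longrightarrow> gform \<rho> (ze s) (ze s) = 1 / \<rho>"
    and T_unit: "\<And>s. s \<in> I \<Longrightarrow> gform \<rho> (T s) (T s) = 1"
    and nn_unit: "\<And>s. s \<in> I \<Longrightarrow> gform \<rho> (nn s) (nn s) = 1"
    and principal: "\<And>s. s \<in> I \<Longrightarrow> gform \<rho> (L (T s)) (nn s) = 0"
    and skew_curvature: "\<And>s. s \<in> I \<Longrightarrow>
          \<bar>gform \<rho> (Y s) (nn s) - gform \<rho> (L (V s)) (nn s) / gform \<rho> (V s) (V s)\<bar> = c"
    and w_ze: "\<And>s. s \<in> I \<Longrightarrow> gform \<rho> w (ze s) = 0"
    and w_T: "\<And>s. s \<in> I \<Longrightarrow> gform \<rho> w (T s) = 0"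
begin

text \<open>k1 and k2 are the principal curvatures along the profile and along the orbits, G is the
  squared length of the orbit velocity.\<close>

definition G where "G s = gform \<rho> (V s) (V s)"
definition h where "h s = gform \<rho> (L (V s)) (T s)"
definition k1 where "k1 s = gform \<rho> (Y s) (nn s)"
definition k2 where "k2 s = gform \<rho> (L (V s)) (nn s) / G s"

lemma frame_gform:
  assumes "s \<in> I"
  shows "gform \<rho> (ze s) (T s) = 0" "gform \<rho> (ze s) (V s) = 0" "gform \<rho> (ze s) (nn s) = 0"
    "gform \<rho> (T s) (V s) = 0" "gform \<rho> (T s) (nn s) = 0" "gform \<rho> (V s) (nn s) = 0"
    "gform \<rho> (T s) (ze s) = 0" "gform \<rho> (V s) (ze s) = 0" "gform \<rho> (nn s) (ze s) = 0"
    "gform \<rho> (V s) (T s) = 0" "gform \<rho> (nn s) (T s) = 0" "gform \<rho> (nn s) (V s) = 0"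
    "gform \<rho> (ze s) (ze s) \<noteq> 0" "G s \<noteq> 0"
  unfolding G_def by (simp_all add: orthogonal_frameD[OF frame[OF assms]])

lemma frame_expansion:
  assumes "s \<in> I"
  shows "z = (gform \<rho> z (ze s) / gform \<rho> (ze s) (ze s)) *\<^sub>R ze s + gform \<rho> z (T s) *\<^sub>R T s +
             (gform \<rho> z (V s) / G s) *\<^sub>R V s + gform \<rho> z (nn s) *\<^sub>R nn s"
  using orthogonal_frame_expansion[OF frame[OF assms], of z] T_unit[OF assms] nn_unit[OF assms]
  by (simp add: G_def)

lemma gform_L_self: "gform \<rho> u (L u) = 0"
  using L_skew[of u u] gform_commute[of \<rho> u "L u"] by simp

lemma L_scaleR: "L (a *\<^sub>R u) = a *\<^sub>R L u"
  using linear_L by (rule linear_scale)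

lemma L_minus: "L (- u) = - L u"
  using linear_L by (rule linear_neg)

lemma Y_T: "s \<in> I \<Longrightarrow> gform \<rho> (Y s) (T s) = 0"
  using gform_const_derivative_sum_eq_0[OF open_I _ T_unit T_deriv T_deriv, of s]
    gform_commute[of \<rho> "T s" "Y s"] by simp

lemma Y_V: "s \<in> I \<Longrightarrow> gform \<rho> (Y s) (V s) = 0"
  using gform_const_derivative_sum_eq_0[OF open_I _ _ T_deriv V_deriv, of s \<rho> 0]
    frame_gform(4) gform_L_self by simp

lemma Y_ze: "s \<in> I \<Longrightarrow> gform \<rho> (Y s) (ze s) = - \<rho> * gform \<rho> (ze s) (ze s)"
  using gform_const_derivative_sum_eq_0[OF open_I _ _ ze_deriv T_deriv, of s \<rho> 0]
    frame_gform(1) T_unit ze_norm gform_commute[of \<rho> "ze s" "Y s"] by (auto split: if_splits)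

lemma Y_eq: "s \<in> I \<Longrightarrow> Y s = (- \<rho>) *\<^sub>R ze s + k1 s *\<^sub>R nn s"
  using frame_expansion[of s "Y s"] Y_ze Y_T Y_V frame_gform(13) by (simp add: k1_def)

lemma L_T_eq: "s \<in> I \<Longrightarrow> L (T s) = (- h s / G s) *\<^sub>R V s"
proof -
  assume s: "s \<in> I"
  have "gform \<rho> (L (T s)) (ze s) = 0"
    using L_skew[of "T s" "ze s"] L_ze[OF s] frame_gform(4)[OF s] by simp
  moreover have "gform \<rho> (L (T s)) (T s) = 0"
    using gform_L_self gform_commute by metis
  moreover have "gform \<rho> (L (T s)) (V s) = - h s"
    using L_skew[of "T s" "V s"] gform_commute[of \<rho> "T s"] by (simp add: h_def)
  ultimately show ?thesis
    using frame_expansion[OF s, of "L (T s)"] principal[OF s] by simp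
qed

lemma nn_deriv: "s \<in> I \<Longrightarrow> (nn has_vector_derivative (- k1 s) *\<^sub>R T s) (at s)"
proof -
  assume s: "s \<in> I"
  have "ze differentiable (at x) \<and> T differentiable (at x) \<and> V differentiable (at x)" if "x \<in> I" for x
    using ze_deriv[OF that] T_deriv[OF that] V_deriv[OF that] by (blast intro: differentiableI_vector)
  then have "nn differentiable (at s)"
    using orthogonal_frame_unit_normal_differentiable[OF open_I s nn_cont _ frame nn_unit] by blast
  then obtain n' where n': "(nn has_vector_derivative n') (at s)"
    using vector_derivative_works by blast
  have "gform \<rho> (ze s) n' + gform \<rho> (if \<rho> = 0 then 0 else T s) (nn s) = 0"
    by (rule gform_const_derivative_sum_eq_0[OF open_I s _ ze_deriv[OF s] n', where k = 0])
      (use frame_gform in auto)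
  then have "gform \<rho> n' (ze s) = 0"
    using frame_gform(5)[OF s] gform_commute[of \<rho> n'] by (auto split: if_splits)
  moreover have "gform \<rho> (T s) n' + gform \<rho> (Y s) (nn s) = 0"
    by (rule gform_const_derivative_sum_eq_0[OF open_I s _ T_deriv[OF s] n', where k = 0])
      (use frame_gform in auto)
  then have "gform \<rho> n' (T s) = - k1 s"
    using gform_commute[of \<rho> n'] by (simp add: k1_def)
  moreover have "gform \<rho> (V s) n' + gform \<rho> (L (T s)) (nn s) = 0"
    by (rule gform_const_derivative_sum_eq_0[OF open_I s _ V_deriv[OF s] n', where k = 0])
      (use frame_gform in auto)
  then have "gform \<rho> n' (V s) = 0"
    using principal[OF s] gform_commute[of \<rho> n'] by simp
  moreover have "gform \<rho> (nn s) n' + gform \<rho> n' (nn s) = 0"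
    by (rule gform_const_derivative_sum_eq_0[OF open_I s _ n' n', where k = 1])
      (use nn_unit in auto)
  then have "gform \<rho> n' (nn s) = 0"
    using gform_commute[of \<rho> n'] by simp
  ultimately have "n' = (- k1 s) *\<^sub>R T s"
    using frame_expansion[OF s, of n'] by simp
  with n' show ?thesis by simp
qed

lemma L_V_deriv: "s \<in> I \<Longrightarrow> ((\<lambda>s. L (V s)) has_vector_derivative L (L (T s))) (at s)"
  using linear_L linear_conv_bounded_linear bounded_linear.has_vector_derivative V_deriv by blast

lemma G_deriv: "s \<in> I \<Longrightarrow> (G has_real_derivative - 2 * h s) (at s)"
proof -
  assume s: "s \<in> I"
  have "gform \<rho> (L (T s)) (V s) = - h s"
    using L_skew[of "T s" "V s"] gform_commute[of \<rho> "T s"] by (simp add: h_def)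
  then show ?thesis
    using has_real_derivative_gform[OF V_deriv[OF s] V_deriv[OF s], of \<rho>] gform_commute[of \<rho> "V s"]
    unfolding G_def by simp
qed

lemma h_deriv:
  "s \<in> I \<Longrightarrow> (h has_real_derivative \<rho> * G s + k1 s * k2 s * G s - (h s)\<^sup>2 / G s) (at s)"
proof -
  assume s: "s \<in> I"
  have "gform \<rho> (L (V s)) (Y s) = - \<rho> * gform \<rho> (L (V s)) (ze s) + k1 s * k2 s * G s"
    using frame_gform(14)[OF s] by (simp add: Y_eq[OF s] gform_linear k2_def)
  also have "- \<rho> * gform \<rho> (L (V s)) (ze s) = \<rho> * G s"
    using L_skew[of "V s" "ze s"] L_ze[OF s] by (simp add: G_def)
  finally have "gform \<rho> (L (V s)) (Y s) = \<rho> * G s + k1 s * k2 s * G s" .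
  moreover have "gform \<rho> (L (L (T s))) (T s) = - (h s)\<^sup>2 / G s"
    by (simp add: L_T_eq[OF s] L_scaleR L_minus gform_linear h_def power2_eq_square)
  ultimately show ?thesis
    using has_real_derivative_gform[OF L_V_deriv[OF s] T_deriv[OF s], of \<rho>] unfolding h_def by simp
qed

lemma k2_deriv: "s \<in> I \<Longrightarrow> (k2 has_real_derivative h s * (k2 s - k1 s) / G s) (at s)"
proof -
  assume s: "s \<in> I"
  define g where "g s = gform \<rho> (L (V s)) (nn s)" for s
  have "gform \<rho> (L (V s)) ((- k1 s) *\<^sub>R T s) + gform \<rho> (L (L (T s))) (nn s) = - k1 s * h s - h s * g s / G s"
    by (simp add: L_T_eq[OF s] L_scaleR L_minus gform_linear h_def g_def)
  then have "(g has_real_derivative - k1 s * h s - h s * g s / G s) (at s)"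
    using has_real_derivative_gform[OF L_V_deriv[OF s] nn_deriv[OF s], of \<rho>] unfolding g_def by simp
  from DERIV_divide[OF this G_deriv[OF s] frame_gform(14)[OF s]]
  have "((\<lambda>s. g s / G s) has_real_derivative
      ((- k1 s * h s - h s * g s / G s) * G s - g s * (- 2 * h s)) / (G s * G s)) (at s)" .
  moreover have "((- k1 s * h s - h s * g s / G s) * G s - g s * (- 2 * h s)) / (G s * G s)
      = h s * (k2 s - k1 s) / G s"
    using frame_gform(14)[OF s] by (simp add: k2_def g_def field_simps)
  ultimately show ?thesis
    unfolding k2_def g_def by simp
qed

lemma k1_minus_k2_constant:
  obtains \<delta> where "\<bar>\<delta>\<bar> = c" "\<And>s. s \<in> I \<Longrightarrow> k1 s - k2 s = \<delta>"
proof -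
  have "continuous_on I k1"
    unfolding k1_def by (intro gform.continuous_on Y_cont nn_cont)
  moreover have "continuous_on I k2"
    using k2_deriv by (intro continuous_at_imp_continuous_on ballI DERIV_isCont) blast
  ultimately have "continuous_on I (\<lambda>s. k1 s - k2 s)"
    by (intro continuous_intros)
  moreover have abs_eq: "\<bar>k1 s - k2 s\<bar> = c" if "s \<in> I" for s
    using skew_curvature[OF that] by (simp add: k1_def k2_def G_def)
  have "k1 s - k2 s \<in> {c, - c}" if "s \<in> I" for s
    using abs_eq[OF that] by (cases "k1 s - k2 s \<ge> 0") auto
  then have "(\<lambda>s. k1 s - k2 s) ` I \<subseteq> {c, - c}"
    by blast
  then have "finite ((\<lambda>s. k1 s - k2 s) ` I)"
    by (rule finite_subset) simp
  ultimately have "(\<lambda>s. k1 s - k2 s) constant_on I"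
    using continuous_finite_range_constant is_interval_connected[OF interval_I] by blast
  then obtain \<delta> where \<delta>: "\<And>s. s \<in> I \<Longrightarrow> k1 s - k2 s = \<delta>"
    unfolding constant_on_def by blast
  obtain s0 where "s0 \<in> I"
    using nonempty_I by blast
  show thesis
    by (rule that[OF _ \<delta>]) (use abs_eq \<delta> \<open>s0 \<in> I\<close> in fastforce)
qed

lemma k1_deriv:
  assumes "\<And>s. s \<in> I \<Longrightarrow> k1 s - k2 s = \<delta>" "s \<in> I"
  shows "(k1 has_real_derivative - \<delta> * h s / G s) (at s)"
proof -
  have "((\<lambda>s. k2 s + \<delta>) has_real_derivative - \<delta> * h s / G s) (at s)"
    using k2_deriv[OF assms(2)] assms by (auto intro!: derivative_eq_intros simp: field_simps)
  then show ?thesis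
    by (rule has_field_derivative_transform_within_open[OF _ open_I assms(2)]) (use assms(1) in force)
qed

lemma w_Y: "s \<in> I \<Longrightarrow> gform \<rho> w (Y s) = 0"
  using gform_const_derivative_sum_eq_0[OF open_I _ w_T has_vector_derivative_const T_deriv, of s]
  by simp

lemma w_nn_constant:
  obtains d where "\<And>s. s \<in> I \<Longrightarrow> gform \<rho> w (nn s) = d"
proof -
  have "((\<lambda>s. gform \<rho> w (nn s)) has_real_derivative 0) (at s within I)" if "s \<in> I" for s
    using has_real_derivative_gform[OF has_vector_derivative_const nn_deriv[OF that], of \<rho> w]
      w_T[OF that] by (simp add: gform_linear has_field_derivative_at_within)
  then show thesis
    using has_field_derivative_zero_constant[OF is_interval_convex[OF interval_I]] that by blast
qed

lemma exp_k1_deriv: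
  assumes \<delta>: "\<bar>\<delta>\<bar> = c" "\<And>s. s \<in> I \<Longrightarrow> k1 s - k2 s = \<delta>" and "s \<in> I"
  shows "((\<lambda>s. exp (- 1 / c * (- (\<delta> / c) * k1 s))) has_real_derivative
      - h s * exp (- 1 / c * (- (\<delta> / c) * k1 s)) / G s) (at s)"
proof -
  have "\<delta> * \<delta> / (c * c) = 1"
    using \<delta>(1) c_pos by (auto simp: abs_if split: if_splits)
  moreover have "- 1 / c * (- (\<delta> / c) * (- \<delta> * h s / G s)) = - (\<delta> * \<delta> / (c * c)) * (h s / G s)"
    using c_pos by (simp add: field_simps)
  moreover have "\<delta> \<noteq> 0"
    using \<delta>(1) c_pos by auto
  ultimately have "- 1 / c * (- (\<delta> / c) * (- \<delta> * h s / G s)) = - h s / G s"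
    by simp
  then show ?thesis
    using DERIV_chain2[OF DERIV_exp DERIV_cmult[OF DERIV_cmult[OF k1_deriv[OF \<delta>(2) \<open>s \<in> I\<close>]]],
        of "- 1 / c" "- (\<delta> / c)"] by (simp add: ac_simps)
qed

lemma exp_euler_lagrange_k1:
  assumes \<delta>: "\<bar>\<delta>\<bar> = c" "\<And>s. s \<in> I \<Longrightarrow> k1 s - k2 s = \<delta>"
  shows "exp_euler_lagrange \<rho> (- 1 / c) I (\<lambda>s. - (\<delta> / c) * k1 s)"
proof -
  define \<epsilon> where "\<epsilon> = \<delta> / c"
  have \<epsilon>: "\<epsilon> * \<epsilon> = 1" "\<delta> = \<epsilon> * c"
    using \<delta>(1) c_pos by (auto simp: \<epsilon>_def abs_if split: if_splits)
  define u where "u s = exp (- 1 / c * (- \<epsilon> * k1 s))" for s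
  define f1 where "f1 s = - h s * u s / G s" for s
  define f2 where "f2 s = - u s * (\<rho> + k1 s * k2 s)" for s
  have u_deriv: "(u has_real_derivative f1 s) (at s)" if "s \<in> I" for s
    using exp_k1_deriv[OF \<delta> that] unfolding u_def f1_def \<epsilon>_def by (simp add: fun_eq_iff)
  have f1_deriv: "(f1 has_real_derivative f2 s) (at s)" if "s \<in> I" for s
  proof -
    note G = frame_gform(14)[OF that]
    have "(f1 has_real_derivative
        ((- (\<rho> * G s + k1 s * k2 s * G s - (h s)\<^sup>2 / G s) * u s + - h s * u s / G s * - h s) * G s
          - - h s * u s * (- 2 * h s)) / (G s * G s)) (at s)"
      unfolding f1_def
      by (intro DERIV_divide DERIV_mult DERIV_minus h_deriv u_deriv[unfolded f1_def] G_deriv that G)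
    moreover have "((- (\<rho> * G s + k1 s * k2 s * G s - (h s)\<^sup>2 / G s) * u s + - h s * u s / G s * - h s) * G s
          - - h s * u s * (- 2 * h s)) / (G s * G s) = f2 s"
      using G by (simp add: f1_def f2_def field_simps power2_eq_square)
    ultimately show ?thesis
      by simp
  qed
  have equation: "f2 s + ((- \<epsilon> * k1 s)\<^sup>2 - (- \<epsilon> * k1 s) / (- 1 / c) + \<rho>) * u s = 0"
    if "s \<in> I" for s
  proof -
    have square: "(- \<epsilon> * k1 s)\<^sup>2 = (\<epsilon> * \<epsilon>) * (k1 s * k1 s)"
      by (simp add: power2_eq_square algebra_simps)
    have quotient: "(- \<epsilon> * k1 s) / (- 1 / c) = (k1 s - k2 s) * k1 s"
      using c_pos \<epsilon>(2) \<delta>(2)[OF that] by (simp add: field_simps)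
    have "f2 s + ((- \<epsilon> * k1 s)\<^sup>2 - (- \<epsilon> * k1 s) / (- 1 / c) + \<rho>) * u s
        = - u s * (\<rho> + k1 s * k2 s) + (k1 s * k1 s - (k1 s - k2 s) * k1 s + \<rho>) * u s"
      unfolding f2_def square quotient \<epsilon>(1) by simp
    also have "\<dots> = 0"
      by (simp add: algebra_simps)
    finally show ?thesis .
  qed
  show ?thesis
    unfolding exp_euler_lagrange_def \<epsilon>_def[symmetric]
    using u_deriv f1_deriv equation unfolding u_def by blast
qed

lemma exp_euler_lagrange_generic:
  assumes w_nn: "\<And>s. s \<in> I \<Longrightarrow> gform \<rho> w (nn s) = 0"
  shows "\<exists>\<nu>. continuous_on I \<nu> \<and>
           (\<forall>s\<in>I. gform \<rho> (\<nu> s) (ze s) = 0 \<and> gform \<rho> w (\<nu> s) = 0 \<and>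
                   gform \<rho> (\<nu> s) (T s) = 0 \<and> gform \<rho> (\<nu> s) (\<nu> s) = 1) \<and>
           exp_euler_lagrange \<rho> (- 1 / c) I (\<lambda>s. gform \<rho> (Y s) (\<nu> s))"
proof -
  obtain \<delta> where \<delta>: "\<bar>\<delta>\<bar> = c" "\<And>s. s \<in> I \<Longrightarrow> k1 s - k2 s = \<delta>"
    using k1_minus_k2_constant by blast
  define \<epsilon> where "\<epsilon> = \<delta> / c"
  define \<nu> where "\<nu> s = (- \<epsilon>) *\<^sub>R nn s" for s
  have "\<epsilon> * \<epsilon> = 1"
    using \<delta>(1) c_pos by (auto simp: \<epsilon>_def abs_if split: if_splits)
  then have "gform \<rho> (\<nu> s) (ze s) = 0 \<and> gform \<rho> w (\<nu> s) = 0 \<and>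
      gform \<rho> (\<nu> s) (T s) = 0 \<and> gform \<rho> (\<nu> s) (\<nu> s) = 1" if "s \<in> I" for s
    using frame_gform[OF that] w_nn[OF that] nn_unit[OF that] by (simp add: \<nu>_def gform_linear)
  moreover have "continuous_on I \<nu>"
    unfolding \<nu>_def by (intro continuous_intros nn_cont)
  moreover have "gform \<rho> (Y s) (\<nu> s) = - (\<delta> / c) * k1 s" for s
    by (simp add: \<nu>_def \<epsilon>_def k1_def gform_linear)
  ultimately show ?thesis
    using exp_euler_lagrange_k1[OF \<delta>] by auto
qed

lemma degenerate_profile_flat_line:
  assumes "s0 \<in> I" "gform \<rho> w (nn s0) \<noteq> 0"
  shows "\<rho> = 0" "\<And>s. s \<in> I \<Longrightarrow> Y s = 0"
proof -
  obtain d where d: "\<And>s. s \<in> I \<Longrightarrow> gform \<rho> w (nn s) = d"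
    using w_nn_constant by blast
  with assms have "d \<noteq> 0" by auto
  have k1_0: "k1 s = 0" if "s \<in> I" for s
    using w_Y[OF that] w_ze[OF that] d[OF that] \<open>d \<noteq> 0\<close> by (simp add: Y_eq[OF that] gform_linear)
  obtain \<delta> where \<delta>: "\<bar>\<delta>\<bar> = c" "\<And>s. s \<in> I \<Longrightarrow> k1 s - k2 s = \<delta>"
    using k1_minus_k2_constant by blast
  have h_0: "h s = 0" if "s \<in> I" for s
  proof -
    have "(k1 has_real_derivative 0) (at s)"
      by (rule has_field_derivative_transform_within_open[OF DERIV_const open_I that]) (simp add: k1_0)
    then have "- \<delta> * h s / G s = 0"
      using DERIV_unique k1_deriv[OF \<delta>(2) that] by blast
    then show ?thesis
      using \<delta>(1) c_pos frame_gform(14)[OF that] by auto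
  qed
  have "(h has_real_derivative 0) (at s0)"
    by (rule has_field_derivative_transform_within_open[OF DERIV_const open_I \<open>s0 \<in> I\<close>]) (simp add: h_0)
  then have "\<rho> * G s0 + k1 s0 * k2 s0 * G s0 - (h s0)\<^sup>2 / G s0 = 0"
    using DERIV_unique h_deriv[OF \<open>s0 \<in> I\<close>] by blast
  then show "\<rho> = 0"
    using k1_0 h_0 frame_gform(14) \<open>s0 \<in> I\<close> by simp
  then show "Y s = 0" if "s \<in> I" for s
    using Y_eq[OF that] k1_0[OF that] by simp
qed

text \<open>If the fixed normal w of the totally geodesic surface is not orthogonal to nn, the profile is a
  straight line of flat space and every constant normal field does the job.\<close>

lemma exp_euler_lagrange_degenerate:
  assumes "s0 \<in> I" "gform \<rho> w (nn s0) \<noteq> 0"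
  shows "\<exists>\<nu>. continuous_on I \<nu> \<and>
           (\<forall>s\<in>I. gform \<rho> (\<nu> s) (ze s) = 0 \<and> gform \<rho> w (\<nu> s) = 0 \<and>
                   gform \<rho> (\<nu> s) (T s) = 0 \<and> gform \<rho> (\<nu> s) (\<nu> s) = 1) \<and>
           exp_euler_lagrange \<rho> (- 1 / c) I (\<lambda>s. gform \<rho> (Y s) (\<nu> s))"
proof -
  note flat = degenerate_profile_flat_line[OF assms]
  obtain T0 where T0: "\<And>s. s \<in> I \<Longrightarrow> T s = T0"
    using has_vector_derivative_zero_constant[OF is_interval_convex[OF interval_I], of T]
      T_deriv flat(2) has_vector_derivative_at_within by (metis (no_types, lifting))
  have "(ze has_vector_derivative 0) (at s)" if "s \<in> I" for s
    using ze_deriv[OF that] flat(1) by simp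
  then obtain Z0 where Z0: "\<And>s. s \<in> I \<Longrightarrow> ze s = Z0"
    using has_vector_derivative_zero_constant[OF is_interval_convex[OF interval_I], of ze]
      has_vector_derivative_at_within by (metis (no_types, lifting))
  obtain \<nu>0 where "\<nu>0 \<bullet> Z0 = 0" "\<nu>0 \<bullet> w = 0" "\<nu>0 \<bullet> T0 = 0" "norm \<nu>0 = 1"
    by (rule exists_unit_orthogonal_real4)
  then have "gform \<rho> \<nu>0 (ze s) = 0 \<and> gform \<rho> w \<nu>0 = 0 \<and> gform \<rho> \<nu>0 (T s) = 0 \<and>
      gform \<rho> \<nu>0 \<nu>0 = 1" if "s \<in> I" for s
    using T0[OF that] Z0[OF that] flat(1)
    by (simp add: gform_flat_eq_inner inner_commute dot_square_norm)
  moreover have "exp_euler_lagrange \<rho> (- 1 / c) I (\<lambda>s. gform \<rho> (Y s) \<nu>0)"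
    using exp_euler_lagrange_zero[OF open_I, of "\<lambda>s. gform \<rho> (Y s) \<nu>0"] flat by simp
  ultimately show ?thesis
    by (intro exI[of _ "\<lambda>_. \<nu>0"]) auto
qed

theorem exp_euler_lagrange_profile:
  "\<exists>\<nu>. continuous_on I \<nu> \<and>
     (\<forall>s\<in>I. gform \<rho> (\<nu> s) (ze s) = 0 \<and> gform \<rho> w (\<nu> s) = 0 \<and>
             gform \<rho> (\<nu> s) (T s) = 0 \<and> gform \<rho> (\<nu> s) (\<nu> s) = 1) \<and>
     exp_euler_lagrange \<rho> (- 1 / c) I (\<lambda>s. gform \<rho> (Y s) (\<nu> s))"
  using exp_euler_lagrange_generic exp_euler_lagrange_degenerate by blast

end

section \<open>Rotational surfaces\<close>

text \<open>At a singular point the curvature functions take the junk values x / 0 = 0.\<close>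

lemma skew_curv_singular:
  assumes "fE \<rho> X s t * fG \<rho> X s t - (fF \<rho> X s t)\<^sup>2 = 0"
  shows "skew_curv \<rho> X n s t = 0"
  unfolding skew_curv_def gauss_curv_def kappa1_def kappa2_def mean_curv_def ext_curv_def assms
  by simp

lemma skew_curv_orthogonal:
  assumes "fE \<rho> X s t = 1" "fF \<rho> X s t = 0" "ff \<rho> X n s t = 0" "fG \<rho> X s t \<noteq> 0"
  shows "skew_curv \<rho> X n s t = \<bar>fe \<rho> X n s t - fg \<rho> X n s t / fG \<rho> X s t\<bar>"
proof -
  define e G g where "e = fe \<rho> X n s t" and "G = fG \<rho> X s t" and "g = fg \<rho> X n s t"
  have H: "mean_curv \<rho> X n s t = (e * G + g) / (2 * G)"
    unfolding mean_curv_def assms e_def G_def g_def by simp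
  have K: "ext_curv \<rho> X n s t = e * g / G"
    unfolding ext_curv_def assms e_def G_def g_def by simp
  define D where "D = (mean_curv \<rho> X n s t)\<^sup>2 - ext_curv \<rho> X n s t"
  define q where "q = (e - g / G) / 2"
  have D: "D = q * q"
    unfolding D_def H K q_def using assms(4)
    by (simp add: G_def field_simps power2_eq_square; simp add: algebra_simps)
  then have "sqrt D * sqrt D = D"
    by simp
  then have "gauss_curv \<rho> X n s t = (mean_curv \<rho> X n s t)\<^sup>2 - D + \<rho>"
    unfolding gauss_curv_def kappa1_def kappa2_def D_def[symmetric]
    by (simp add: algebra_simps power2_eq_square)
  then have "skew_curv \<rho> X n s t = 2 * sqrt D"
    unfolding skew_curv_def by simp
  also have "\<dots> = 2 * \<bar>q\<bar>"
    unfolding D by simp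
  also have "\<dots> = \<bar>e - g / G\<bar>"
    unfolding q_def by simp
  finally show ?thesis
    by (simp add: e_def G_def g_def)
qed

locale rotational_surface = rotation +
  fixes I :: "real set" and \<gamma> :: "real \<Rightarrow> real^4" and n :: "real \<Rightarrow> real \<Rightarrow> real^4"
  assumes open_I: "open I"
    and smooth: "smooth_curve I \<gamma>"
    and profile_in_Mspace: "\<And>s. s \<in> I \<Longrightarrow> \<gamma> s \<in> Mspace \<rho>"
    and unit_speed: "\<And>s. s \<in> I \<Longrightarrow> gform \<rho> (vd 1 \<gamma> s) (vd 1 \<gamma> s) = 1"
    and orthogonal_orbits: "\<And>s. s \<in> I \<Longrightarrow> gform \<rho> (vd 1 \<gamma> s) (pd_t (\<lambda>s t. \<Phi> t (\<gamma> s)) s 0) = 0"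
    and normal: "unit_normal_field \<rho> (\<lambda>s t. \<Phi> t (\<gamma> s)) n (I \<times> UNIV)"
begin

abbreviation X where "X \<equiv> \<lambda>s t. \<Phi> t (\<gamma> s)"

definition T where "T = vd 1 \<gamma>"
definition Y where "Y = vd 2 \<gamma>"
definition V where "V s = gen (\<gamma> s - center)" for s
definition nn where "nn s = n s 0" for s

text \<open>A gform-normal of Mspace rho at gamma s: the position vector on the sphere and the hyperboloid,
  the first axis for the hyperplane.\<close>

definition ze where "ze s = (if \<rho> = 0 then axis 1 1 else \<gamma> s)" for s

lemma profile_deriv: "s \<in> I \<Longrightarrow> (\<gamma> has_vector_derivative T s) (at s)"
  using smooth_curve_has_vector_derivative[OF smooth, of s 0] by (simp add: T_def vd_0)

lemma T_deriv: "s \<in> I \<Longrightarrow> (T has_vector_derivative Y s) (at s)"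
  using smooth_curve_has_vector_derivative[OF smooth, of s 1] by (simp add: T_def Y_def numeral_2_eq_2)

lemma Y_cont: "continuous_on I Y"
  using smooth_curve_has_vector_derivative[OF smooth, of _ 2] unfolding Y_def
  by (intro continuous_at_imp_continuous_on ballI differentiable_imp_continuous_within
      differentiableI_vector, blast)

lemma T_in_W: "s \<in> I \<Longrightarrow> T s \<in> W"
proof (cases "\<rho> = 0")
  case True
  assume "s \<in> I"
  show ?thesis
    using vec_nth_derivative_eq_0[OF open_I \<open>s \<in> I\<close> _ profile_deriv[OF \<open>s \<in> I\<close>]] profile_in_Mspace
    by (simp add: W_flat[OF True] Mspace_flat[OF True])
qed (simp add: W_curved)

lemma V_deriv: "s \<in> I \<Longrightarrow> (V has_vector_derivative gen (T s)) (at s)"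
  using bounded_linear.has_vector_derivative[OF bounded_linear_gen
      has_vector_derivative_diff[OF profile_deriv has_vector_derivative_const]]
  unfolding V_def by simp

lemma pd_s_X: "s \<in> I \<Longrightarrow> pd_s X s t = rot t (T s)"
proof -
  assume s: "s \<in> I"
  have "((\<lambda>s. rot t (\<gamma> s - center) + center) has_vector_derivative rot t (T s)) (at s)"
    unfolding has_vector_derivative_add_const
    using bounded_linear.has_vector_derivative[OF bounded_linear_rot
        has_vector_derivative_diff[OF profile_deriv[OF s] has_vector_derivative_const]] by simp
  then show ?thesis
    unfolding pd_s_def rot_def by (simp add: vector_derivative_at)
qed

lemma pd_t_X: "s \<in> I \<Longrightarrow> pd_t X s t = rot t (V s)"
  unfolding pd_t_def V_def using orbit_has_vector_derivative[OF profile_in_Mspace]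
  by (simp add: vector_derivative_at)

lemma pd_s_X_0: "s \<in> I \<Longrightarrow> pd_s X s 0 = T s"
  using pd_s_X rot_differentiable(2)[OF T_in_W] by simp

lemma pd_t_X_0: "s \<in> I \<Longrightarrow> pd_t X s 0 = V s"
  using pd_t_X rot_differentiable(2)[OF gen_in_W] by (simp add: V_def)

lemma pd_s_pd_s_X: "s \<in> I \<Longrightarrow> pd_s (pd_s X) s 0 = Y s"
proof -
  assume s: "s \<in> I"
  have "((\<lambda>s. pd_s X s 0) has_vector_derivative Y s) (at s)"
    by (rule has_vector_derivative_transform_within_open[OF T_deriv[OF s] open_I s]) (simp add: pd_s_X_0)
  then show ?thesis
    unfolding pd_s_def[of "pd_s X"] by (rule vector_derivative_at)
qed

lemma pd_t_pd_s_X: "s \<in> I \<Longrightarrow> pd_t (pd_s X) s 0 = gen (T s)"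
proof -
  assume s: "s \<in> I"
  have "pd_s X s = (\<lambda>t. rot t (T s))"
    using pd_s_X[OF s] by (simp add: fun_eq_iff)
  then show ?thesis
    unfolding pd_t_def[of "pd_s X"] using vector_derivative_at[OF has_vector_derivative_rot[OF T_in_W[OF s]]]
    by simp
qed

lemma pd_t_pd_t_X: "s \<in> I \<Longrightarrow> pd_t (pd_t X) s 0 = gen (V s)"
proof -
  assume s: "s \<in> I"
  have "pd_t X s = (\<lambda>t. rot t (V s))"
    using pd_t_X[OF s] by (simp add: fun_eq_iff)
  then show ?thesis
    unfolding pd_t_def[of "pd_t X"] using vector_derivative_at[OF has_vector_derivative_rot[OF gen_in_W]]
    by (simp add: V_def)
qed

lemma normal_along_profile:
  assumes "s \<in> I"
  shows "nn s \<in> Tsp \<rho> (\<gamma> s)" "gform \<rho> (nn s) (nn s) = 1"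
    "gform \<rho> (T s) (nn s) = 0" "gform \<rho> (V s) (nn s) = 0"
proof -
  have "\<forall>(s, t)\<in>I \<times> UNIV. n s t \<in> Tsp \<rho> (X s t) \<and> gform \<rho> (n s t) (n s t) = 1 \<and>
      gform \<rho> (n s t) (pd_s X s t) = 0 \<and> gform \<rho> (n s t) (pd_t X s t) = 0"
    using normal unfolding unit_normal_field_def by (rule conjunct2)
  from bspec[OF this, of "(s, 0)"] assms
  have "n s 0 \<in> Tsp \<rho> (X s 0) \<and> gform \<rho> (n s 0) (n s 0) = 1 \<and>
      gform \<rho> (n s 0) (pd_s X s 0) = 0 \<and> gform \<rho> (n s 0) (pd_t X s 0) = 0"
    by (simp only: case_prod_conv mem_Times_iff fst_conv snd_conv UNIV_I simp_thms)
  then show "nn s \<in> Tsp \<rho> (\<gamma> s)" "gform \<rho> (nn s) (nn s) = 1"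
    "gform \<rho> (T s) (nn s) = 0" "gform \<rho> (V s) (nn s) = 0"
    using Phi_0[OF profile_in_Mspace[OF assms]] pd_s_X_0[OF assms] pd_t_X_0[OF assms]
      gform_commute[of \<rho> "T s" "n s 0"] gform_commute[of \<rho> "V s" "n s 0"]
    by (simp_all add: nn_def)
qed

lemma nn_cont: "continuous_on I nn"
proof -
  have "continuous_on (I \<times> UNIV) (\<lambda>(s, t). n s t)"
    using normal unfolding unit_normal_field_def by blast
  then have "continuous_on ((\<lambda>s. (s, 0)) ` I) (\<lambda>(s, t). n s t)"
    by (rule continuous_on_subset) auto
  then have "continuous_on I ((\<lambda>(s, t). n s t) \<circ> (\<lambda>s. (s, 0::real)))"
    by (intro continuous_on_compose continuous_intros)
  then show ?thesis
    by (simp add: nn_def o_def)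
qed

lemma ze_deriv: "s \<in> I \<Longrightarrow> (ze has_vector_derivative (if \<rho> = 0 then 0 else T s)) (at s)"
  unfolding ze_def using profile_deriv by auto

lemma gen_ze: "gen (ze s) = (if \<rho> = 0 then 0 else V s)"
  unfolding ze_def V_def using gen_axis_1 center_curved by auto

lemma ze_norm: "s \<in> I \<Longrightarrow> \<rho> \<noteq> 0 \<Longrightarrow> gform \<rho> (ze s) (ze s) = 1 / \<rho>"
  unfolding ze_def using Mspace_curved_norm[OF profile_in_Mspace] by auto

lemma gform_ze_eq_0_iff: "s \<in> I \<Longrightarrow> gform \<rho> v (ze s) = 0 \<longleftrightarrow> v \<in> Tsp \<rho> (\<gamma> s)"
  unfolding ze_def Tsp_def by (auto simp: gform_flat_axis1)

lemma gform_W_ze: "u \<in> W \<Longrightarrow> s \<in> I \<Longrightarrow> \<rho> = 0 \<Longrightarrow> gform \<rho> u (ze s) = 0"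
  unfolding ze_def W_def by (simp add: gform_flat_axis1)

lemma profile_orthogonal_frame:
  assumes "s \<in> I" "gform \<rho> (V s) (V s) \<noteq> 0"
  shows "orthogonal_frame \<rho> (ze s) (T s) (V s) (nn s)"
proof -
  have "gform \<rho> (T s) (ze s) = 0"
  proof (cases "\<rho> = 0")
    case False
    have "gform \<rho> (\<gamma> s) (T s) + gform \<rho> (T s) (\<gamma> s) = 0"
      using gform_const_derivative_sum_eq_0[OF open_I assms(1) _ profile_deriv[OF assms(1)]
          profile_deriv[OF assms(1)]] Mspace_curved_norm[OF profile_in_Mspace False] by blast
    then show ?thesis
      using gform_commute[of \<rho> "\<gamma> s"] False by (simp add: ze_def)
  qed (use T_in_W[OF assms(1)] gform_W_ze[OF _ assms(1)] in blast)
  moreover have "gform \<rho> (V s) (ze s) = 0"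
  proof (cases "\<rho> = 0")
    case True
    show ?thesis
      using gform_W_ze[OF gen_in_W assms(1) True] by (simp add: V_def)
  next
    case False
    then show ?thesis
      using gen_skew[of "\<gamma> s" "\<gamma> s"] gform_commute[of \<rho> "gen (\<gamma> s)"]
      by (simp add: V_def ze_def center_curved)
  qed
  moreover have "gform \<rho> (nn s) (ze s) = 0"
    using normal_along_profile(1)[OF assms(1)] gform_ze_eq_0_iff[OF assms(1)] by blast
  moreover have "gform \<rho> (ze s) (ze s) \<noteq> 0"
  proof (cases "\<rho> = 0")
    case True
    then show ?thesis
      unfolding ze_def by (simp add: gform_def axis_def)
  qed (use ze_norm[OF assms(1)] in simp)
  moreover have "gform \<rho> (T s) (V s) = 0"
    using orthogonal_orbits[OF assms(1)] pd_t_X_0[OF assms(1)] by (simp add: T_def)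
  ultimately show ?thesis
    using normal_along_profile[OF assms(1)] unit_speed[OF assms(1)] assms(2)
      gform_commute[of \<rho> "T s" "ze s"] gform_commute[of \<rho> "V s" "ze s"]
      gform_commute[of \<rho> "nn s" "ze s"]
    unfolding orthogonal_frame_def by (simp add: T_def)
qed

lemma fundamental_forms:
  assumes "s \<in> I"
  shows "fE \<rho> X s 0 = 1" "fF \<rho> X s 0 = 0" "fG \<rho> X s 0 = gform \<rho> (V s) (V s)"
    "fe \<rho> X n s 0 = gform \<rho> (Y s) (nn s)" "ff \<rho> X n s 0 = gform \<rho> (gen (T s)) (nn s)"
    "fg \<rho> X n s 0 = gform \<rho> (gen (V s)) (nn s)"
  using unit_speed[OF assms] orthogonal_orbits[OF assms]
  by (simp_all add: fE_def fF_def fG_def fe_def ff_def fg_def pd_s_X_0[OF assms] pd_t_X_0[OF assms]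
      pd_s_pd_s_X[OF assms] pd_t_pd_s_X[OF assms] pd_t_pd_t_X[OF assms] T_def nn_def)

text \<open>The profile is a line of curvature: a kernel vector of gen that is not parallel to ze s,
  written in the frame, would otherwise have to vanish.\<close>

lemma profile_principal:
  assumes "s \<in> I" "gform \<rho> (V s) (V s) \<noteq> 0"
  shows "gform \<rho> (gen (T s)) (nn s) = 0"
proof (rule ccontr)
  assume f: "gform \<rho> (gen (T s)) (nn s) \<noteq> 0"
  note frame = profile_orthogonal_frame[OF assms]
  have "\<rho> = 0 \<Longrightarrow> ze s \<notin> W"
    unfolding ze_def W_def by (simp add: axis_def)
  then obtain k where k: "k \<in> W" "gen k = 0" "\<And>a. k \<noteq> a *\<^sub>R ze s"
    using gen_kernel_not_parallel by blast
  have "gform \<rho> k (V s) = 0"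
    using gen_skew[of k "\<gamma> s - center"] k(2) by (simp add: V_def)
  then have k_eq: "k = (gform \<rho> k (ze s) / gform \<rho> (ze s) (ze s)) *\<^sub>R ze s + gform \<rho> k (T s) *\<^sub>R T s
      + gform \<rho> k (nn s) *\<^sub>R nn s"
    using orthogonal_frame_expansion[OF frame, of k] normal_along_profile(2)[OF assms(1)]
      unit_speed[OF assms(1)] by (simp add: T_def)
  define a b d where "a = gform \<rho> k (ze s) / gform \<rho> (ze s) (ze s)" and "b = gform \<rho> k (T s)"
    and "d = gform \<rho> k (nn s)"
  have gen_k: "a *\<^sub>R gen (ze s) + b *\<^sub>R gen (T s) + d *\<^sub>R gen (nn s) = 0"
    using k(2) k_eq linear_add[OF linear_gen] linear_scale[OF linear_gen] unfolding a_def b_def d_def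
    by metis
  have orth: "gform \<rho> (gen (ze s)) (T s) = 0" "gform \<rho> (gen (ze s)) (nn s) = 0"
    using frame normal_along_profile(4)[OF assms(1)] gform_commute[of \<rho> "V s" "T s"]
    by (auto simp: gen_ze orthogonal_frame_def)
  have "gform \<rho> (gen (T s)) (T s) = 0" "gform \<rho> (gen (nn s)) (nn s) = 0"
    using gen_skew[of "T s" "T s"] gen_skew[of "nn s" "nn s"] gform_commute[of \<rho> "T s"]
      gform_commute[of \<rho> "nn s"] by auto
  moreover have "gform \<rho> (gen (nn s)) (T s) = - gform \<rho> (gen (T s)) (nn s)"
    using gen_skew[of "nn s" "T s"] gform_commute[of \<rho> "nn s"] by simp
  ultimately have "- d * gform \<rho> (gen (T s)) (nn s) = 0" "b * gform \<rho> (gen (T s)) (nn s) = 0"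
    using arg_cong[OF gen_k, of "\<lambda>x. gform \<rho> x (T s)"] arg_cong[OF gen_k, of "\<lambda>x. gform \<rho> x (nn s)"]
      orth by (simp_all add: gform_linear)
  then have "k = a *\<^sub>R ze s"
    using f k_eq by (simp add: a_def b_def d_def)
  with k(3) show False
    by blast
qed

lemma profile_frame_of_constant_skew:
  assumes "is_interval I" "I \<noteq> {}" "c > 0"
    and skew: "\<And>s. s \<in> I \<Longrightarrow> skew_curv \<rho> X n s 0 = c"
    and tg: "tg_data \<rho> p w" "\<And>s. s \<in> I \<Longrightarrow> \<gamma> s \<in> tg_surface \<rho> p w"
  shows "profile_frame \<rho> c I w ze T Y V nn gen"
proof -
  have G: "gform \<rho> (V s) (V s) \<noteq> 0" if "s \<in> I" for s
    using skew_curv_singular[of \<rho> X s 0 n] skew[OF that] fundamental_forms[OF that] \<open>c > 0\<close> by auto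
  have w_tangent: "gform \<rho> w (\<gamma> s - p) = 0" if "s \<in> I" for s
    using tg(2)[OF that] by (simp add: tg_surface_def)
  have w_T: "gform \<rho> w (T s) = 0" if "s \<in> I" for s
    using gform_const_derivative_sum_eq_0[OF open_I that w_tangent has_vector_derivative_const
        has_vector_derivative_diff[OF profile_deriv[OF that] has_vector_derivative_const]] by simp
  have w_ze: "gform \<rho> w (ze s) = 0" if "s \<in> I" for s
    using tg(1) w_tangent[OF that]
    by (auto simp: tg_data_def Tsp_def ze_def gform_flat_axis1 gform_linear)
  have skew_eq: "\<bar>gform \<rho> (Y s) (nn s) - gform \<rho> (gen (V s)) (nn s) / gform \<rho> (V s) (V s)\<bar> = c"
    if "s \<in> I" for s
    using skew_curv_orthogonal[of \<rho> X s 0 n] fundamental_forms[OF that]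
      profile_principal[OF that G[OF that]] G[OF that] skew[OF that] by simp
  have L_ze: "gen (ze s) = (if \<rho> = 0 then 0 else V s)" if "s \<in> I" for s
    by (rule gen_ze)
  have frame: "orthogonal_frame \<rho> (ze s) (T s) (V s) (nn s)" if "s \<in> I" for s
    using profile_orthogonal_frame[OF that G[OF that]] .
  have T_unit: "gform \<rho> (T s) (T s) = 1" if "s \<in> I" for s
    using unit_speed[OF that] by (simp add: T_def)
  have principal: "gform \<rho> (gen (T s)) (nn s) = 0" if "s \<in> I" for s
    using profile_principal[OF that G[OF that]] .
  show ?thesis
    by (rule profile_frame.intro) (fact assms(1-3) open_I linear_gen gen_skew ze_deriv T_deriv Y_cont
        V_deriv L_ze nn_cont frame ze_norm T_unit normal_along_profile(2) principal skew_eq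
        w_ze w_T)+
qed

end

theorem theorem2p1:
  fixes \<rho> c :: real
    and I :: "real set"
    and \<gamma> \<beta> :: "real \<Rightarrow> real^4"
    and \<Phi> :: "real \<Rightarrow> real^4 \<Rightarrow> real^4"
    and p w :: "real^4"
    and n :: "real \<Rightarrow> real \<Rightarrow> real^4"
  defines "X \<equiv> (\<lambda>s t. \<Phi> t (\<gamma> s))"
  assumes rot: "rotation_group \<rho> \<Phi> \<beta>"
    and I: "open I" "is_interval I" "I \<noteq> {}"
    and smooth: "smooth_curve I \<gamma>"
    and tg: "tg_data \<rho> p w"
    and in_tg: "\<forall>s\<in>I. \<gamma> s \<in> tg_surface \<rho> p w"
    and arclength: "\<forall>s\<in>I. gform \<rho> (vd 1 \<gamma> s) (vd 1 \<gamma> s) = 1"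
    and orth: "\<forall>s\<in>I. gform \<rho> (vd 1 \<gamma> s) (pd_t X s 0) = 0"
    and immersion: "\<forall>s\<in>I. \<forall>t. \<forall>a b. a *\<^sub>R pd_s X s t + b *\<^sub>R pd_t X s t = 0 \<longrightarrow> a = 0 \<and> b = 0"
    and normal: "unit_normal_field \<rho> X n (I \<times> UNIV)"
    and c: "c > 0"
    and skew: "\<forall>s\<in>I. \<forall>t. skew_curv \<rho> X n s t = c"
    and noniso: "\<not> isoparametric \<rho> X n (I \<times> UNIV)"
  shows "\<exists>\<nu> :: real \<Rightarrow> real^4. continuous_on I \<nu> \<and>
           (\<forall>s\<in>I. \<nu> s \<in> Tsp \<rho> (\<gamma> s) \<and> gform \<rho> w (\<nu> s) = 0 \<and>
                   gform \<rho> (\<nu> s) (vd 1 \<gamma> s) = 0 \<and> gform \<rho> (\<nu> s) (\<nu> s) = 1) \<and>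
           (let \<mu> = - 1 / c; \<kappa> = (\<lambda>s. gform \<rho> (vd 2 \<gamma> s) (\<nu> s)) in
             (\<exists>f1 f2 :: real \<Rightarrow> real. \<forall>s\<in>I.
                ((\<lambda>s. exp (\<mu> * \<kappa> s)) has_real_derivative f1 s) (at s) \<and>
                (f1 has_real_derivative f2 s) (at s) \<and>
                f2 s + ((\<kappa> s)^2 - \<kappa> s / \<mu> + \<rho>) * exp (\<mu> * \<kappa> s) = 0))"
proof -
  have "rotational_surface \<rho> \<Phi> \<beta> I \<gamma> n"
    by (intro rotational_surface.intro rotation.intro rotational_surface_axioms.intro)
      (use rot I(1) smooth in_tg arclength orth normal in \<open>auto simp: X_def tg_surface_def\<close>)
  then interpret rotational_surface \<rho> \<Phi> \<beta> I \<gamma> n .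
  have "skew_curv \<rho> (\<lambda>s t. \<Phi> t (\<gamma> s)) n s 0 = c" if "s \<in> I" for s
    using skew that unfolding X_def by blast
  then have "profile_frame \<rho> c I w ze T Y V nn gen"
    using profile_frame_of_constant_skew[OF I(2,3) c _ tg] in_tg by blast
  then obtain \<nu> where "continuous_on I \<nu>"
    and \<nu>: "\<forall>s\<in>I. gform \<rho> (\<nu> s) (ze s) = 0 \<and> gform \<rho> w (\<nu> s) = 0 \<and>
      gform \<rho> (\<nu> s) (T s) = 0 \<and> gform \<rho> (\<nu> s) (\<nu> s) = 1"
    and "exp_euler_lagrange \<rho> (- 1 / c) I (\<lambda>s. gform \<rho> (Y s) (\<nu> s))"
    using profile_frame.exp_euler_lagrange_profile by blast
  moreover have "\<nu> s \<in> Tsp \<rho> (\<gamma> s)" if "s \<in> I" for s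
    using \<nu> that gform_ze_eq_0_iff by blast
  ultimately show ?thesis
    unfolding exp_euler_lagrange_def Let_def T_def Y_def by blast
qed

end
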